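(* Let $(W,+)$ be a commutative group with subgroups $F\le B\le W$, where $F=\{0,1\}$ has order $2$ (so $1$ denotes an element of order $2$ of $W$, and $F$ is identified with the field with two elements). Suppose that $\overline W=W/B$ is an elementary abelian $2$-group, regarded as a vector space over $F$. Let $\overline q:\overline W\to F$ be a quadratic form with associated bilinear form $\overline h:\overline W\times\overline W\to F$, $\overline h(\overline u,\overline v)=\overline q(\overline u+\overline v)-\overline q(\overline u)-\overline q(\overline v)$. Define $q:W\to F$ and $h:W\times W\to F$ by $q(u)=\overline q(u+B)$ and $h(u,v)=\overline h(u+B,v+B)$. Let $Q=\mathcal Q(F,B,W,\overline q)$ be the magma on $F\times W$ with multiplication $$(i,u)\cdot(j,v)=(i+j,\ u+v+jq(u)+ih(u,v)),$$ where $i+j$ and the products $jq(u)$, $ih(u,v)$ are computed in the field $F$ and then regarded as elements of $F\subseteq W$. Then: (i) $Q$ is a centrally nilpotent loop, and it is a central extension of the commutative group $B$ by the elementary abelian $2$-group $F\times\overline W$; (ii) $Q$ is congruence solvable and hence classically solvable; (iii) $Q$ is an extra loop; (iv) $Q$ is a group if and only if the quadratic form $\overline q$ is linear; (v) $X=0\times W$ is an abelian normal subloop of $Q$ (i.e. a normal subloop that is a commutative group); (vi) if $Q$ is not a group, then the congruence of $Q$ induced by $X$ is not abelian.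
   Context: A loop is a magma $(Q,\cdot,1)$ with two-sided identity $1$ in which all left and right translations $y\mapsto xy$, $y\mapsto yx$ are bijections. A subloop is normal if it is the kernel of a loop homomorphism. The nucleus $\mathrm{Nuc}(Q)$ is the set of $x$ with $x(yz)=(xy)z$, $y(xz)=(yx)z$, $y(zx)=(yz)x$ for all $y,z$; the center $Z(Q)$ consists of nuclear elements commuting with all elements. Given a commutative group $(X,+,0)$, a loop $F'$ and $\theta:F'\times F'\to X$ with $\theta_{1,r}=0=\theta_{r,1}$, the loop on $F'\times X$ with $(r,x)(s,y)=(rs,x+y+\theta_{r,s})$ is a central extension of $X$ by $F'$. A loop is centrally nilpotent if it has a series $Q=Q_0\ge Q_1\ge\dots\ge Q_n=1$ of normal subloops of $Q$ with $Q_i/Q_{i+1}\le Z(Q/Q_{i+1})$. A quadratic form on a vector space $V$ over a field $K$ is a map $q:V\to K$ with $q(\lambda u)=\lambda^2q(u)$ such that $(u,v)\mapsto q(u+v)-q(u)-q(v)$ is bilinear. An extra loop is a loop satisfying $x(y\cdot zx)=(xy\cdot z)x$. For a normal subloop $X$ of a loop $Q$, the induced congruence $\alpha_X$ has classes $\{aX\}$; $X$ induces an abelian congruence (is abelian in $Q$) if $[\alpha_X,\alpha_X]_Q$ is the trivial congruence in the Freese–McKenzie commutator theory of congruence modular varieties; equivalently, $Q$ is isomorphic to an abelian extension of $X$ by $Q/X$, i.e. a loop on $Q/X\times X$ with $(r,x)(s,y)=(rs,\varphi_{r,s}(x)+\psi_{r,s}(y)+\theta_{r,s})$ where $\varphi_{r,s},\psi_{r,s}\in\mathrm{Aut}(X)$,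 $\theta_{r,s}\in X$, $\varphi_{r,1}=\mathrm{id}=\psi_{1,r}$, $\theta_{1,r}=0=\theta_{r,1}$. A loop is classically solvable if it has a series $Q=Q_0\ge\dots\ge Q_n=1$ of normal subloops of $Q$ with each $Q_i/Q_{i+1}$ a commutative group; it is congruence solvable if it has such a series with each $Q_i/Q_{i+1}$ inducing an abelian congruence of $Q/Q_{i+1}$. *)

theory Defs
  imports Main
begin

definition loop :: "'a set \<Rightarrow> ('a \<Rightarrow> 'a \<Rightarrow> 'a) \<Rightarrow> 'a \<Rightarrow> bool" where
  "loop S m u \<longleftrightarrow> u \<in> S \<and> (\<forall>x\<in>S. \<forall>y\<in>S. m x y \<in> S)
     \<and> (\<forall>x\<in>S. m u x = x \<and> m x u = x)
     \<and> (\<forall>x\<in>S. bij_betw (m x) S S \<and> bij_betw (\<lambda>y. m y x) S S)"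

definition is_group :: "'a set \<Rightarrow> ('a \<Rightarrow> 'a \<Rightarrow> 'a) \<Rightarrow> 'a \<Rightarrow> bool" where
  "is_group S m u \<longleftrightarrow> loop S m u
     \<and> (\<forall>x\<in>S. \<forall>y\<in>S. \<forall>z\<in>S. m x (m y z) = m (m x y) z)"

definition is_comm_group :: "'a set \<Rightarrow> ('a \<Rightarrow> 'a \<Rightarrow> 'a) \<Rightarrow> 'a \<Rightarrow> bool" where
  "is_comm_group S m u \<longleftrightarrow> is_group S m u \<and> (\<forall>x\<in>S. \<forall>y\<in>S. m x y = m y x)"

definition loop_hom :: "'a set \<Rightarrow> ('a \<Rightarrow> 'a \<Rightarrow> 'a) \<Rightarrow> 'b set \<Rightarrow> ('b \<Rightarrow> 'b \<Rightarrow> 'b) \<Rightarrow> ('a \<Rightarrow> 'b) \<Rightarrow> bool" where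
  "loop_hom S m T m' f \<longleftrightarrow> (\<forall>x\<in>S. f x \<in> T) \<and> (\<forall>x\<in>S. \<forall>y\<in>S. f (m x y) = m' (f x) (f y))"

definition loop_iso :: "'a set \<Rightarrow> ('a \<Rightarrow> 'a \<Rightarrow> 'a) \<Rightarrow> 'b set \<Rightarrow> ('b \<Rightarrow> 'b \<Rightarrow> 'b) \<Rightarrow> ('a \<Rightarrow> 'b) \<Rightarrow> bool" where
  "loop_iso S m T m' f \<longleftrightarrow> loop_hom S m T m' f \<and> bij_betw f S T"

text \<open>Normal subloop = kernel of a loop homomorphism. Every homomorphic image of a loop on
  type 'a is isomorphic to a loop on cosets, i.e. on type 'a set, so codomains of that type suffice.\<close>
definition normal_subloop :: "'a set \<Rightarrow> ('a \<Rightarrow> 'a \<Rightarrow> 'a) \<Rightarrow> 'a \<Rightarrow> 'a set \<Rightarrow> bool" where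
  "normal_subloop S m u N \<longleftrightarrow>
     (\<exists>(T::'a set set) m' u' f. loop T m' u' \<and> loop_hom S m T m' f \<and> N = {x\<in>S. f x = u'})"

definition nucleus :: "'a set \<Rightarrow> ('a \<Rightarrow> 'a \<Rightarrow> 'a) \<Rightarrow> 'a set" where
  "nucleus S m = {x\<in>S. \<forall>y\<in>S. \<forall>z\<in>S. m x (m y z) = m (m x y) z
                        \<and> m y (m x z) = m (m y x) z \<and> m y (m z x) = m (m y z) x}"

definition center :: "'a set \<Rightarrow> ('a \<Rightarrow> 'a \<Rightarrow> 'a) \<Rightarrow> 'a set" where
  "center S m = {x\<in>nucleus S m. \<forall>y\<in>S. m x y = m y x}"

definition extra_loop :: "'a set \<Rightarrow> ('a \<Rightarrow> 'a \<Rightarrow> 'a) \<Rightarrow> 'a \<Rightarrow> bool" where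
  "extra_loop S m u \<longleftrightarrow> loop S m u
     \<and> (\<forall>x\<in>S. \<forall>y\<in>S. \<forall>z\<in>S. m x (m y (m z x)) = m (m (m x y) z) x)"

definition lcoset :: "('a \<Rightarrow> 'a \<Rightarrow> 'a) \<Rightarrow> 'a \<Rightarrow> 'a set \<Rightarrow> 'a set" where
  "lcoset m x N = (\<lambda>n. m x n) ` N"

definition qcar :: "'a set \<Rightarrow> ('a \<Rightarrow> 'a \<Rightarrow> 'a) \<Rightarrow> 'a set \<Rightarrow> 'a set set" where
  "qcar S m N = (\<lambda>x. lcoset m x N) ` S"

definition qmul :: "('a \<Rightarrow> 'a \<Rightarrow> 'a) \<Rightarrow> 'a set \<Rightarrow> 'a set \<Rightarrow> 'a set \<Rightarrow> 'a set" where
  "qmul m N A C = lcoset m (m (SOME a. a \<in> A) (SOME c. c \<in> C)) N"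

definition subquot :: "('a \<Rightarrow> 'a \<Rightarrow> 'a) \<Rightarrow> 'a set \<Rightarrow> 'a set \<Rightarrow> 'a set set" where
  "subquot m M N = (\<lambda>x. lcoset m x N) ` M"

definition ldiv :: "'a set \<Rightarrow> ('a \<Rightarrow> 'a \<Rightarrow> 'a) \<Rightarrow> 'a \<Rightarrow> 'a \<Rightarrow> 'a" where
  "ldiv S m x z = (THE y. y \<in> S \<and> m x y = z)"

definition rdiv :: "'a set \<Rightarrow> ('a \<Rightarrow> 'a \<Rightarrow> 'a) \<Rightarrow> 'a \<Rightarrow> 'a \<Rightarrow> 'a" where
  "rdiv S m z y = (THE x. x \<in> S \<and> m x y = z)"

definition loop_congruence :: "'a set \<Rightarrow> ('a \<Rightarrow> 'a \<Rightarrow> 'a) \<Rightarrow> ('a \<times> 'a) set \<Rightarrow> bool" where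
  "loop_congruence S m \<theta> \<longleftrightarrow> equiv S \<theta> \<and>
     (\<forall>a b c d. (a, b) \<in> \<theta> \<longrightarrow> (c, d) \<in> \<theta> \<longrightarrow>
        (m a c, m b d) \<in> \<theta> \<and> (ldiv S m a c, ldiv S m b d) \<in> \<theta> \<and> (rdiv S m a c, rdiv S m b d) \<in> \<theta>)"

inductive_set loop_terms :: "'a set \<Rightarrow> ('a \<Rightarrow> 'a \<Rightarrow> 'a) \<Rightarrow> 'a
    \<Rightarrow> ((nat \<Rightarrow> 'a) \<Rightarrow> (nat \<Rightarrow> 'a) \<Rightarrow> 'a) set"
  for S m u where
  proj1: "(\<lambda>x y. x i) \<in> loop_terms S m u"
| proj2: "(\<lambda>x y. y i) \<in> loop_terms S m u"
| unit: "(\<lambda>x y. u) \<in> loop_terms S m u"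
| mul: "t1 \<in> loop_terms S m u \<Longrightarrow> t2 \<in> loop_terms S m u \<Longrightarrow>
          (\<lambda>x y. m (t1 x y) (t2 x y)) \<in> loop_terms S m u"
| ld: "t1 \<in> loop_terms S m u \<Longrightarrow> t2 \<in> loop_terms S m u \<Longrightarrow>
          (\<lambda>x y. ldiv S m (t1 x y) (t2 x y)) \<in> loop_terms S m u"
| rd: "t1 \<in> loop_terms S m u \<Longrightarrow> t2 \<in> loop_terms S m u \<Longrightarrow>
          (\<lambda>x y. rdiv S m (t1 x y) (t2 x y)) \<in> loop_terms S m u"

definition centralizes :: "'a set \<Rightarrow> ('a \<Rightarrow> 'a \<Rightarrow> 'a) \<Rightarrow> 'a
    \<Rightarrow> ('a \<times> 'a) set \<Rightarrow> ('a \<times> 'a) set \<Rightarrow> ('a \<times> 'a) set \<Rightarrow> bool" where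
  "centralizes S m u \<alpha> \<beta> \<delta> \<longleftrightarrow>
     (\<forall>t\<in>loop_terms S m u. \<forall>a b c d.
        (\<forall>i. a i \<in> S \<and> b i \<in> S \<and> c i \<in> S \<and> d i \<in> S \<and> (a i, b i) \<in> \<alpha> \<and> (c i, d i) \<in> \<beta>) \<longrightarrow>
        (t a c, t a d) \<in> \<delta> \<longrightarrow> (t b c, t b d) \<in> \<delta>)"

definition commutator :: "'a set \<Rightarrow> ('a \<Rightarrow> 'a \<Rightarrow> 'a) \<Rightarrow> 'a
    \<Rightarrow> ('a \<times> 'a) set \<Rightarrow> ('a \<times> 'a) set \<Rightarrow> ('a \<times> 'a) set" where
  "commutator S m u \<alpha> \<beta> = \<Inter>{\<delta>. loop_congruence S m \<delta> \<and> centralizes S m u \<alpha> \<beta> \<delta>}"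

definition abelian_congruence :: "'a set \<Rightarrow> ('a \<Rightarrow> 'a \<Rightarrow> 'a) \<Rightarrow> 'a \<Rightarrow> ('a \<times> 'a) set \<Rightarrow> bool" where
  "abelian_congruence S m u \<alpha> \<longleftrightarrow> commutator S m u \<alpha> \<alpha> = Id_on S"

definition induced_cong :: "'a set \<Rightarrow> ('a \<Rightarrow> 'a \<Rightarrow> 'a) \<Rightarrow> 'a set \<Rightarrow> ('a \<times> 'a) set" where
  "induced_cong S m X = {(a, b). a \<in> S \<and> b \<in> S \<and> lcoset m a X = lcoset m b X}"

definition centrally_nilpotent :: "'a set \<Rightarrow> ('a \<Rightarrow> 'a \<Rightarrow> 'a) \<Rightarrow> 'a \<Rightarrow> bool" where
  "centrally_nilpotent S m u \<longleftrightarrow> loop S m u \<and>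
     (\<exists>(Qs :: nat \<Rightarrow> 'a set) n. Qs 0 = S \<and> Qs n = {u}
        \<and> (\<forall>i\<le>n. normal_subloop S m u (Qs i))
        \<and> (\<forall>i<n. Qs (Suc i) \<subseteq> Qs i
              \<and> subquot m (Qs i) (Qs (Suc i)) \<subseteq> center (qcar S m (Qs (Suc i))) (qmul m (Qs (Suc i)))))"

definition classically_solvable :: "'a set \<Rightarrow> ('a \<Rightarrow> 'a \<Rightarrow> 'a) \<Rightarrow> 'a \<Rightarrow> bool" where
  "classically_solvable S m u \<longleftrightarrow> loop S m u \<and>
     (\<exists>(Qs :: nat \<Rightarrow> 'a set) n. Qs 0 = S \<and> Qs n = {u}
        \<and> (\<forall>i\<le>n. normal_subloop S m u (Qs i))
        \<and> (\<forall>i<n. Qs (Suc i) \<subseteq> Qs i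
              \<and> is_comm_group (subquot m (Qs i) (Qs (Suc i))) (qmul m (Qs (Suc i))) (Qs (Suc i))))"

definition congruence_solvable :: "'a set \<Rightarrow> ('a \<Rightarrow> 'a \<Rightarrow> 'a) \<Rightarrow> 'a \<Rightarrow> bool" where
  "congruence_solvable S m u \<longleftrightarrow> loop S m u \<and>
     (\<exists>(Qs :: nat \<Rightarrow> 'a set) n. Qs 0 = S \<and> Qs n = {u}
        \<and> (\<forall>i\<le>n. normal_subloop S m u (Qs i))
        \<and> (\<forall>i<n. Qs (Suc i) \<subseteq> Qs i
              \<and> abelian_congruence (qcar S m (Qs (Suc i))) (qmul m (Qs (Suc i))) (Qs (Suc i))
                  (induced_cong (qcar S m (Qs (Suc i))) (qmul m (Qs (Suc i)))
                      (subquot m (Qs i) (Qs (Suc i))))))"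

definition cext_mul :: "('f \<Rightarrow> 'f \<Rightarrow> 'f) \<Rightarrow> ('f \<Rightarrow> 'f \<Rightarrow> 'x::ab_group_add)
    \<Rightarrow> 'f \<times> 'x \<Rightarrow> 'f \<times> 'x \<Rightarrow> 'f \<times> 'x" where
  "cext_mul Fm \<theta> p p' = (Fm (fst p) (fst p'), snd p + snd p' + \<theta> (fst p) (fst p'))"

definition is_central_extension ::
  "'a set \<Rightarrow> ('a \<Rightarrow> 'a \<Rightarrow> 'a) \<Rightarrow> 'x::ab_group_add set
     \<Rightarrow> 'f set \<Rightarrow> ('f \<Rightarrow> 'f \<Rightarrow> 'f) \<Rightarrow> 'f \<Rightarrow> bool" where
  "is_central_extension S m X Fc Fm Fu \<longleftrightarrow>
     loop Fc Fm Fu \<and> is_comm_group X (+) 0 \<and>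
     (\<exists>\<theta> f. (\<forall>r\<in>Fc. \<theta> Fu r = 0 \<and> \<theta> r Fu = 0) \<and> (\<forall>r\<in>Fc. \<forall>s\<in>Fc. \<theta> r s \<in> X)
        \<and> loop_iso S m (Fc \<times> X) (cext_mul Fm \<theta>) f)"

definition F2mul :: "'a::ab_group_add \<Rightarrow> 'a \<Rightarrow> 'a \<Rightarrow> 'a" where
  "F2mul e a b = (if a = e \<and> b = e then e else 0)"

definition coset :: "'a::ab_group_add set \<Rightarrow> 'a \<Rightarrow> 'a set" where
  "coset B u = (\<lambda>b. u + b) ` B"

definition cosets :: "'a::ab_group_add set \<Rightarrow> 'a set set" where
  "cosets B = range (coset B)"

definition cadd :: "'a::ab_group_add set \<Rightarrow> 'a set \<Rightarrow> 'a set" where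
  "cadd U V = {a + b | a b. a \<in> U \<and> b \<in> V}"

definition csmul :: "'a::ab_group_add \<Rightarrow> 'a set \<Rightarrow> 'a \<Rightarrow> 'a set \<Rightarrow> 'a set" where
  "csmul e B l U = (if l = e then U else B)"

definition assoc_bilin :: "('a::ab_group_add set \<Rightarrow> 'a) \<Rightarrow> 'a set \<Rightarrow> 'a set \<Rightarrow> 'a" where
  "assoc_bilin qb U V = qb (cadd U V) - qb U - qb V"

definition is_quadratic_form :: "'a::ab_group_add \<Rightarrow> 'a set \<Rightarrow> ('a set \<Rightarrow> 'a) \<Rightarrow> bool" where
  "is_quadratic_form e B qb \<longleftrightarrow>
     (\<forall>U\<in>cosets B. qb U \<in> {0, e})
   \<and> (\<forall>l\<in>{0, e}. \<forall>U\<in>cosets B. qb (csmul e B l U) = F2mul e (F2mul e l l) (qb U))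
   \<and> (\<forall>U\<in>cosets B. \<forall>U'\<in>cosets B. \<forall>V\<in>cosets B.
        assoc_bilin qb (cadd U U') V = assoc_bilin qb U V + assoc_bilin qb U' V
      \<and> assoc_bilin qb V (cadd U U') = assoc_bilin qb V U + assoc_bilin qb V U')
   \<and> (\<forall>l\<in>{0, e}. \<forall>U\<in>cosets B. \<forall>V\<in>cosets B.
        assoc_bilin qb (csmul e B l U) V = F2mul e l (assoc_bilin qb U V)
      \<and> assoc_bilin qb U (csmul e B l V) = F2mul e l (assoc_bilin qb U V))"

definition is_linear_form :: "'a::ab_group_add \<Rightarrow> 'a set \<Rightarrow> ('a set \<Rightarrow> 'a) \<Rightarrow> bool" where
  "is_linear_form e B qb \<longleftrightarrow>
     (\<forall>U\<in>cosets B. \<forall>V\<in>cosets B. qb (cadd U V) = qb U + qb V)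
   \<and> (\<forall>l\<in>{0, e}. \<forall>U\<in>cosets B. qb (csmul e B l U) = F2mul e l (qb U))"

definition qlift :: "'a::ab_group_add set \<Rightarrow> ('a set \<Rightarrow> 'a) \<Rightarrow> 'a \<Rightarrow> 'a" where
  "qlift B qb u = qb (coset B u)"

definition hlift :: "'a::ab_group_add set \<Rightarrow> ('a set \<Rightarrow> 'a) \<Rightarrow> 'a \<Rightarrow> 'a \<Rightarrow> 'a" where
  "hlift B qb u v = assoc_bilin qb (coset B u) (coset B v)"

definition Qcar :: "'a::ab_group_add \<Rightarrow> ('a \<times> 'a) set" where
  "Qcar e = {0, e} \<times> UNIV"

definition Qmul :: "'a::ab_group_add \<Rightarrow> 'a set \<Rightarrow> ('a set \<Rightarrow> 'a) \<Rightarrow> 'a \<times> 'a \<Rightarrow> 'a \<times> 'a \<Rightarrow> 'a \<times> 'a" where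
  "Qmul e B qb p p' = (case p of (i, u) \<Rightarrow> case p' of (j, v) \<Rightarrow>
      (i + j, u + v + F2mul e j (qlift B qb u) + F2mul e i (hlift B qb u v)))"

definition FWbar_car :: "'a::ab_group_add \<Rightarrow> 'a set \<Rightarrow> ('a \<times> 'a set) set" where
  "FWbar_car e B = {0, e} \<times> cosets B"

definition FWbar_mul :: "'a::ab_group_add \<times> 'a set \<Rightarrow> 'a \<times> 'a set \<Rightarrow> 'a \<times> 'a set" where
  "FWbar_mul p p' = (fst p + fst p', cadd (snd p) (snd p'))"

end

theory Submission
  imports Defs
begin

text \<open>
  The projection \<open>(i, u) \<mapsto> (i, u + B)\<close> is a homomorphism from \<open>Q\<close> onto the elementary abelian
  2-group \<open>F \<times> W/B\<close> whose kernel \<open>N = 0 \<times> B\<close> is central.  So \<open>Q\<close> is a central extension of \<open>B\<close>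
  (its cocycle is read off from a choice of coset representatives), and \<open>Q \<ge> N \<ge> 1\<close> is a central
  series.  The same series witnesses both kinds of solvability, because a central subloop \<open>Z\<close>
  induces an abelian congruence: every term operation satisfies
  \<open>t(a z, c w) = t(a, c) L(z) R(w)\<close> for central \<open>z, w\<close>, which is exactly what the term condition needs.

  Writing elements as \<open>(a e, u + p e)\<close> with bits \<open>a, p\<close> turns every identity of \<open>Q\<close> into a
  Boolean identity in the bits \<open>q(u)\<close>, \<open>h(u, v)\<close>.  This gives the associator in closed form,
  from which the extra law follows, \<open>Q\<close> is a group iff \<open>h = 0\<close> (i.e. \<open>q\<close> is linear), and, when
  \<open>h \<noteq> 0\<close>, a term violating the term condition for \<open>X = 0 \<times> W\<close>.
\<close>

section \<open>Loops\<close>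

lemma bij_betw_self_iff:
  assumes "\<forall>y\<in>S. f y \<in> S"
  shows "bij_betw f S S \<longleftrightarrow> (\<forall>y\<in>S. \<exists>z\<in>S. f z = y) \<and> (\<forall>y\<in>S. \<forall>z\<in>S. f y = f z \<longrightarrow> y = z)"
proof -
  have "f ` S = S \<longleftrightarrow> (\<forall>y\<in>S. \<exists>z\<in>S. f z = y)"
  proof
    assume "f ` S = S" then show "\<forall>y\<in>S. \<exists>z\<in>S. f z = y" by (metis imageE)
  next
    assume "\<forall>y\<in>S. \<exists>z\<in>S. f z = y" then show "f ` S = S" using assms by (auto simp: image_iff)
  qed
  then show ?thesis unfolding bij_betw_def inj_on_def by blast
qed

lemma loop_iff:
  "loop S m u \<longleftrightarrow> u \<in> S \<and> (\<forall>x\<in>S. \<forall>y\<in>S. m x y \<in> S) \<and> (\<forall>x\<in>S. m u x = x \<and> m x u = x)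
     \<and> (\<forall>x\<in>S. \<forall>y\<in>S. \<exists>z\<in>S. m x z = y) \<and> (\<forall>x\<in>S. \<forall>y\<in>S. \<exists>z\<in>S. m z x = y)
     \<and> (\<forall>x\<in>S. \<forall>y\<in>S. \<forall>z\<in>S. m x y = m x z \<longrightarrow> y = z)
     \<and> (\<forall>x\<in>S. \<forall>y\<in>S. \<forall>z\<in>S. m y x = m z x \<longrightarrow> y = z)" (is "?loop \<longleftrightarrow> ?rhs")
proof
  assume loop: ?loop
  then have closed: "\<forall>x\<in>S. \<forall>y\<in>S. m x y \<in> S" unfolding loop_def by blast
  have "((\<forall>y\<in>S. \<exists>z\<in>S. m x z = y) \<and> (\<forall>y\<in>S. \<forall>z\<in>S. m x y = m x z \<longrightarrow> y = z))
     \<and> ((\<forall>y\<in>S. \<exists>z\<in>S. m z x = y) \<and> (\<forall>y\<in>S. \<forall>z\<in>S. m y x = m z x \<longrightarrow> y = z))" if x: "x \<in> S" for x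
  proof -
    have maps: "\<forall>y\<in>S. m x y \<in> S" "\<forall>y\<in>S. m y x \<in> S" using closed x by auto
    have "bij_betw (m x) S S" "bij_betw (\<lambda>y. m y x) S S" using loop x unfolding loop_def by auto
    then show ?thesis using bij_betw_self_iff[OF maps(1)] bij_betw_self_iff[OF maps(2)] by blast
  qed
  then show ?rhs using loop closed unfolding loop_def by blast
next
  assume rhs: ?rhs
  then have closed: "\<forall>x\<in>S. \<forall>y\<in>S. m x y \<in> S" by blast
  have "bij_betw (m x) S S \<and> bij_betw (\<lambda>y. m y x) S S" if x: "x \<in> S" for x
  proof -
    have maps: "\<forall>y\<in>S. m x y \<in> S" "\<forall>y\<in>S. m y x \<in> S" using closed x by auto
    show ?thesis using bij_betw_self_iff[OF maps(1)] bij_betw_self_iff[OF maps(2)] rhs x by blast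
  qed
  then show ?loop unfolding loop_def using rhs closed by blast
qed

lemma loopD:
  assumes "loop S m u"
  shows loop_unit: "u \<in> S" and loop_closed: "x \<in> S \<Longrightarrow> y \<in> S \<Longrightarrow> m x y \<in> S"
    and loop_left_unit: "x \<in> S \<Longrightarrow> m u x = x" and loop_right_unit: "x \<in> S \<Longrightarrow> m x u = x"
    and loop_left_cancel: "x \<in> S \<Longrightarrow> y \<in> S \<Longrightarrow> z \<in> S \<Longrightarrow> m x y = m x z \<Longrightarrow> y = z"
    and loop_right_cancel: "x \<in> S \<Longrightarrow> y \<in> S \<Longrightarrow> z \<in> S \<Longrightarrow> m y x = m z x \<Longrightarrow> y = z"
    and loop_left_solvable: "x \<in> S \<Longrightarrow> y \<in> S \<Longrightarrow> \<exists>z\<in>S. m x z = y"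
    and loop_right_solvable: "x \<in> S \<Longrightarrow> y \<in> S \<Longrightarrow> \<exists>z\<in>S. m z x = y"
  using assms unfolding loop_iff by blast+

lemma comm_group_loop: "is_comm_group S m u \<Longrightarrow> loop S m u"
  unfolding is_comm_group_def is_group_def by blast

lemma ldiv_unique:
  assumes "loop S m u" "x \<in> S" "y \<in> S" "m x y = z"
  shows "ldiv S m x z = y"
  unfolding ldiv_def using assms loop_left_cancel[OF assms(1)] by (intro the_equality) blast+

lemma
  assumes "loop S m u" "x \<in> S" "z \<in> S"
  shows ldiv_closed: "ldiv S m x z \<in> S" and mult_ldiv: "m x (ldiv S m x z) = z"
  using ldiv_unique[OF assms(1,2)] loop_left_solvable[OF assms] by metis+

lemma rdiv_unique:
  assumes "loop S m u" "y \<in> S" "x \<in> S" "m x y = z"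
  shows "rdiv S m z y = x"
  unfolding rdiv_def using assms loop_right_cancel[OF assms(1)] by (intro the_equality) blast+

lemma
  assumes "loop S m u" "y \<in> S" "z \<in> S"
  shows rdiv_closed: "rdiv S m z y \<in> S" and rdiv_mult: "m (rdiv S m z y) y = z"
  using rdiv_unique[OF assms(1,2)] loop_right_solvable[OF assms] by metis+

lemma comm_groupI:
  assumes unit: "u \<in> S" and closed: "\<And>x y. x \<in> S \<Longrightarrow> y \<in> S \<Longrightarrow> m x y \<in> S"
    and left_unit: "\<And>x. x \<in> S \<Longrightarrow> m u x = x"
    and assoc: "\<And>x y z. x \<in> S \<Longrightarrow> y \<in> S \<Longrightarrow> z \<in> S \<Longrightarrow> m x (m y z) = m (m x y) z"
    and comm: "\<And>x y. x \<in> S \<Longrightarrow> y \<in> S \<Longrightarrow> m x y = m y x"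
    and inverse: "\<And>x. x \<in> S \<Longrightarrow> \<exists>y\<in>S. m x y = u"
  shows "is_comm_group S m u"
proof -
  have solvable: "\<exists>z\<in>S. m x z = y" if xy: "x \<in> S" "y \<in> S" for x y
  proof -
    obtain x' where "x' \<in> S" "m x x' = u" using inverse xy by blast
    then have "m x (m x' y) = y" using assoc[of x x' y] left_unit xy by simp
    then show ?thesis using closed \<open>x' \<in> S\<close> xy by blast
  qed
  have cancel: "y = z" if xyz: "x \<in> S" "y \<in> S" "z \<in> S" "m x y = m x z" for x y z
  proof -
    obtain x' where x': "x' \<in> S" "m x' x = u" using inverse comm xyz(1) by metis
    have "y = m x' (m x y)" using assoc[of x' x y] x' xyz left_unit by simp
    also have "\<dots> = z" using assoc[of x' x z] x' xyz left_unit by simp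
    finally show ?thesis .
  qed
  have "loop S m u" unfolding loop_iff
  proof (intro conjI ballI)
    fix x y z assume "x \<in> S" "y \<in> S" "z \<in> S"
    then show "m x y = m x z \<longrightarrow> y = z" "m y x = m z x \<longrightarrow> y = z"
      using cancel[of x y z] comm by metis+
  next
    fix x y assume "x \<in> S" "y \<in> S"
    then show "m x y \<in> S" "\<exists>z\<in>S. m x z = y" "\<exists>z\<in>S. m z x = y"
      using closed solvable comm by metis+
  qed (use unit left_unit comm in auto)
  then show ?thesis unfolding is_comm_group_def is_group_def using assoc comm by blast
qed

lemma comm_group_center:
  assumes "is_comm_group S m u" shows "center S m = S"
proof -
  have "m x (m y z) = m (m x y) z" "m x y = m y x" if "x \<in> S" "y \<in> S" "z \<in> S" for x y z
    using assms that unfolding is_comm_group_def is_group_def by blast+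
  then show ?thesis unfolding center_def nucleus_def by auto
qed

lemma loop_isoI:
  assumes "bij_betw f S T" and "\<And>x y. x \<in> S \<Longrightarrow> y \<in> S \<Longrightarrow> f (m x y) = m' (f x) (f y)"
  shows "loop_iso S m T m' f"
  using assms unfolding loop_iso_def loop_hom_def bij_betw_def by auto

context
  fixes S :: "'a set" and m and T :: "'b set" and m' and f
  assumes iso: "loop_iso S m T m' f"
begin

lemma loop_iso_image: "T = f ` S"
  using iso unfolding loop_iso_def bij_betw_def by blast

lemma loop_iso_mult: "x \<in> S \<Longrightarrow> y \<in> S \<Longrightarrow> m' (f x) (f y) = f (m x y)"
  using iso unfolding loop_iso_def loop_hom_def by simp

lemma loop_iso_eq_iff: "x \<in> S \<Longrightarrow> y \<in> S \<Longrightarrow> f x = f y \<longleftrightarrow> x = y"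
  using iso unfolding loop_iso_def bij_betw_def inj_on_def by blast

lemma loop_iso_loop:
  assumes "loop S m u" shows "loop T m' (f u)"
  unfolding loop_iff loop_iso_image
proof (intro conjI ballI)
  show "f u \<in> f ` S" using loop_unit[OF assms] by blast
next
  fix X Y assume "X \<in> f ` S" "Y \<in> f ` S"
  then obtain x y where xy: "x \<in> S" "y \<in> S" "X = f x" "Y = f y" by blast
  show "m' X Y \<in> f ` S" using xy by (simp add: loop_iso_mult loop_closed[OF assms])
  obtain z z' where z: "z \<in> S" "m x z = y" and z': "z' \<in> S" "m z' x = y"
    using loop_left_solvable[OF assms xy(1,2)] loop_right_solvable[OF assms xy(1,2)] by blast
  show "\<exists>z\<in>f ` S. m' X z = Y"
  proof
    show "m' X (f z) = Y" using xy z by (simp add: loop_iso_mult)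
  qed (use z in blast)
  show "\<exists>z\<in>f ` S. m' z X = Y"
  proof
    show "m' (f z') X = Y" using xy z' by (simp add: loop_iso_mult)
  qed (use z' in blast)
next
  fix X assume "X \<in> f ` S"
  then obtain x where "x \<in> S" "X = f x" by blast
  then show "m' (f u) X = X" "m' X (f u) = X"
    using loop_unit[OF assms] loop_left_unit[OF assms] loop_right_unit[OF assms]
    by (simp_all add: loop_iso_mult)
next
  fix X Y Z assume "X \<in> f ` S" "Y \<in> f ` S" "Z \<in> f ` S"
  then obtain x y z where xyz: "x \<in> S" "y \<in> S" "z \<in> S" "X = f x" "Y = f y" "Z = f z" by blast
  then show "m' X Y = m' X Z \<longrightarrow> Y = Z" "m' Y X = m' Z X \<longrightarrow> Y = Z"
    using loop_left_cancel[OF assms, of x y z] loop_right_cancel[OF assms, of x y z]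
    by (simp_all add: loop_iso_mult loop_iso_eq_iff loop_closed[OF assms])
qed

lemma loop_iso_center:
  assumes "loop S m u" "x \<in> S"
  shows "f x \<in> center T m' \<longleftrightarrow> x \<in> center S m"
  unfolding center_def nucleus_def loop_iso_image using assms(2)
  by (simp add: loop_iso_mult loop_iso_eq_iff loop_closed[OF assms(1)])

lemma loop_iso_comm_group:
  assumes "is_comm_group S m u" shows "is_comm_group T m' (f u)"
proof -
  have loop: "loop S m u" using comm_group_loop[OF assms] .
  show ?thesis unfolding is_comm_group_def is_group_def
  proof (intro conjI ballI)
    show "loop T m' (f u)" using loop_iso_loop[OF loop] .
  next
    fix X Y Z assume "X \<in> T" "Y \<in> T" "Z \<in> T"
    then obtain x y z where xyz: "x \<in> S" "y \<in> S" "z \<in> S" "X = f x" "Y = f y" "Z = f z"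
      using loop_iso_image by blast
    have "m x (m y z) = m (m x y) z" using assms xyz unfolding is_comm_group_def is_group_def by blast
    then show "m' X (m' Y Z) = m' (m' X Y) Z" using xyz by (simp add: loop_iso_mult loop_closed[OF loop])
  next
    fix X Y assume "X \<in> T" "Y \<in> T"
    then obtain x y where xy: "x \<in> S" "y \<in> S" "X = f x" "Y = f y" using loop_iso_image by blast
    have "m x y = m y x" using assms xy unfolding is_comm_group_def by blast
    then show "m' X Y = m' Y X" using xy by (simp add: loop_iso_mult)
  qed
qed

end

lemma normal_subloop_kernel:
  fixes \<phi> :: "'a \<Rightarrow> 'b"
  assumes T: "loop T m' u'" and hom: "loop_hom S m T m' \<phi>" and onto: "\<phi> ` S = T"
  shows "normal_subloop S m u {x \<in> S. \<phi> x = u'}"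
proof -
  \<comment> \<open>The definition of normal subloops asks for a codomain of type \<open>'a set\<close>: transport \<open>T\<close>
    there along the fibres of \<open>\<phi>\<close>.\<close>
  define fibre where "fibre t = {x \<in> S. \<phi> x = t}" for t
  define mf where "mf A C = fibre (m' (\<phi> (SOME a. a \<in> A)) (\<phi> (SOME c. c \<in> C)))" for A C
  have fibre_some: "\<phi> (SOME a. a \<in> fibre t) = t" if "t \<in> T" for t
  proof -
    have "\<exists>a. a \<in> fibre t" using that onto unfolding fibre_def by blast
    then show ?thesis unfolding fibre_def by (metis (mono_tags, lifting) mem_Collect_eq someI_ex)
  qed
  have fibre_inj: "inj_on fibre T"
    by (rule inj_on_inverseI[where g = "\<lambda>A. \<phi> (SOME a. a \<in> A)"]) (rule fibre_some)
  have iso: "loop_iso T m' (fibre ` T) mf fibre"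
    by (rule loop_isoI) (use fibre_inj fibre_some in \<open>auto simp: bij_betw_def mf_def\<close>)
  have hom_mult: "\<phi> (m x y) = m' (\<phi> x) (\<phi> y)" and hom_in: "\<phi> x \<in> T" if "x \<in> S" "y \<in> S" for x y
    using hom that unfolding loop_hom_def by auto
  have "loop_hom S m (fibre ` T) mf (fibre \<circ> \<phi>)"
    unfolding loop_hom_def using hom_mult hom_in loop_iso_mult[OF iso] by auto
  moreover have "{x \<in> S. \<phi> x = u'} = {x \<in> S. (fibre \<circ> \<phi>) x = fibre u'}"
    using inj_onD[OF fibre_inj] hom_in loop_unit[OF T] by auto
  ultimately show ?thesis unfolding normal_subloop_def using loop_iso_loop[OF iso T] by blast
qed

lemma loop_iso_fibres_quotient:
  assumes S: "loop S m u" and hom: "loop_hom S m T m' \<phi>" and onto: "\<phi> ` S = T"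
    and lcoset_fibre: "\<And>x. x \<in> S \<Longrightarrow> lcoset m x N = {y \<in> S. \<phi> y = \<phi> x}"
  shows "loop_iso T m' (qcar S m N) (qmul m N) (\<lambda>t. {y \<in> S. \<phi> y = t})"
proof -
  define fibre where "fibre t = {y \<in> S. \<phi> y = t}" for t
  have qcar: "qcar S m N = fibre ` T"
    unfolding qcar_def onto[symmetric] image_image fibre_def using lcoset_fibre by (intro image_cong) auto
  have some_fibre: "(SOME a. a \<in> fibre t) \<in> S \<and> \<phi> (SOME a. a \<in> fibre t) = t" if "t \<in> T" for t
  proof -
    have "\<exists>a. a \<in> fibre t" using onto that unfolding fibre_def by blast
    then show ?thesis using someI_ex[of "\<lambda>a. a \<in> fibre t"] unfolding fibre_def by blast
  qed
  have hom_mult: "\<phi> (m x y) = m' (\<phi> x) (\<phi> y)" if "x \<in> S" "y \<in> S" for x y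
    using hom that unfolding loop_hom_def by auto
  note closed = loop_closed[OF S]
  show ?thesis unfolding fibre_def[symmetric] qcar
  proof (rule loop_isoI)
    show "bij_betw fibre T (fibre ` T)"
      unfolding bij_betw_def
      by (rule conjI[OF inj_on_inverseI[where g = "\<lambda>A. \<phi> (SOME a. a \<in> A)"] refl]) (use some_fibre in blast)
  next
    fix t t' assume "t \<in> T" "t' \<in> T"
    then show "fibre (m' t t') = qmul m N (fibre t) (fibre t')"
      unfolding qmul_def using lcoset_fibre closed some_fibre hom_mult unfolding fibre_def by simp
  qed
qed

lemma normal_subloop_whole:
  assumes "loop S m u" shows "normal_subloop S m u S"
proof -
  have "loop {()} (\<lambda>_ _. ()) ()" unfolding loop_iff by simp
  moreover have "loop_hom S m {()} (\<lambda>_ _. ()) (\<lambda>_. ())" unfolding loop_hom_def by simp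
  moreover have "(\<lambda>_. ()) ` S = {()}" using loop_unit[OF assms] by blast
  ultimately have "normal_subloop S m u {x \<in> S. () = ()}" by (rule normal_subloop_kernel)
  then show ?thesis by simp
qed

lemma normal_subloop_unit:
  assumes "loop S m u" shows "normal_subloop S m u {u}"
proof -
  have "loop_hom S m S m id" unfolding loop_hom_def using loop_closed[OF assms] by simp
  then have "normal_subloop S m u {x \<in> S. id x = u}"
    by (rule normal_subloop_kernel[OF assms]) simp
  moreover have "{x \<in> S. id x = u} = {u}" using loop_unit[OF assms] by auto
  ultimately show ?thesis by simp
qed

lemma qcar_eq_subquot: "qcar S m N = subquot m S N"
  unfolding qcar_def subquot_def ..

lemma lcoset_unit: "loop S m u \<Longrightarrow> x \<in> S \<Longrightarrow> lcoset m x {u} = {x}"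
  unfolding lcoset_def by (simp add: loop_right_unit)

lemma qmul_unit: "loop S m u \<Longrightarrow> x \<in> S \<Longrightarrow> y \<in> S \<Longrightarrow> qmul m {u} {x} {y} = {m x y}"
  unfolding qmul_def by (simp add: lcoset_unit loop_closed)

lemma subquot_unit: "loop S m u \<Longrightarrow> N \<subseteq> S \<Longrightarrow> subquot m N {u} = (\<lambda>x. {x}) ` N"
  unfolding subquot_def by (intro image_cong) (auto simp: lcoset_unit)

lemma loop_iso_singletons:
  assumes "loop S m u" "N \<subseteq> S"
  shows "loop_iso N m (subquot m N {u}) (qmul m {u}) (\<lambda>x. {x})"
  unfolding subquot_unit[OF assms]
proof (rule loop_isoI)
  show "bij_betw (\<lambda>x. {x}) N ((\<lambda>x. {x}) ` N)" by (simp add: bij_betw_def inj_on_def)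
  fix x y assume "x \<in> N" "y \<in> N"
  then show "{m x y} = qmul m {u} {x} {y}" using assms(2) by (simp add: qmul_unit[OF assms(1)] subsetD)
qed

subsection \<open>Central subloops induce abelian congruences\<close>

lemma
  assumes "k \<in> center S m" "x \<in> S" "y \<in> S"
  shows center_assoc_right: "m x (m y k) = m (m x y) k"
    and center_assoc_middle: "m (m x k) y = m (m x y) k"
proof -
  have nuclear: "m x (m k y) = m (m x k) y" "m x (m y k) = m (m x y) k" and comm: "m k y = m y k"
    using assms unfolding center_def nucleus_def by blast+
  then show "m x (m y k) = m (m x y) k" by blast
  show "m (m x k) y = m (m x y) k" using nuclear comm by simp
qed

lemma center_mult_interchange:
  assumes "loop S m u" "k \<in> center S m" "k' \<in> center S m" "x \<in> S" "y \<in> S"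
  shows "m (m x k) (m y k') = m (m x y) (m k k')"
proof -
  have "k \<in> S" "k' \<in> S" using assms(2,3) unfolding center_def nucleus_def by blast+
  note closed = loop_closed[OF assms(1)]
  have "m (m x k) (m y k') = m (m (m x k) y) k'"
    using center_assoc_right[OF assms(3)] assms(4,5) \<open>k \<in> S\<close> closed by simp
  also have "\<dots> = m (m (m x y) k) k'" using center_assoc_middle[OF assms(2,4,5)] by simp
  also have "\<dots> = m (m x y) (m k k')"
    using center_assoc_right[OF assms(3)] assms(4,5) \<open>k \<in> S\<close> closed by simp
  finally show ?thesis .
qed

locale central_subloop =
  fixes S :: "'a set" and m :: "'a \<Rightarrow> 'a \<Rightarrow> 'a" and u :: 'a and Z :: "'a set"
  assumes loop: "loop S m u" and Z_center: "Z \<subseteq> center S m" and Z_loop: "loop Z m u"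
begin

lemma Z_subset: "Z \<subseteq> S"
  using Z_center unfolding center_def nucleus_def by blast

lemma Z_mem: "k \<in> Z \<Longrightarrow> k \<in> S" "k \<in> Z \<Longrightarrow> k \<in> center S m"
  using Z_subset Z_center by blast+

lemma ldiv_Z: "k \<in> Z \<Longrightarrow> k' \<in> Z \<Longrightarrow> ldiv S m k k' \<in> Z"
  using ldiv_unique[OF loop] loop_left_solvable[OF Z_loop] Z_mem(1) by metis

lemma rdiv_Z: "k \<in> Z \<Longrightarrow> k' \<in> Z \<Longrightarrow> rdiv S m k' k \<in> Z"
  using rdiv_unique[OF loop] loop_right_solvable[OF Z_loop] Z_mem(1) by metis

definition Z_linear :: "('a \<Rightarrow> 'a \<Rightarrow> 'a) \<Rightarrow> bool" where
  "Z_linear op \<longleftrightarrow> (\<forall>x\<in>S. \<forall>y\<in>S. op x y \<in> S) \<and> (\<forall>k\<in>Z. \<forall>k'\<in>Z. op k k' \<in> Z) \<and> op u u = u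
     \<and> (\<forall>x\<in>S. \<forall>y\<in>S. \<forall>k\<in>Z. \<forall>k'\<in>Z. op (m x k) (m y k') = m (op x y) (op k k'))"

lemma mult_Z_linear: "Z_linear m"
  unfolding Z_linear_def
  using loop_closed[OF loop] loop_closed[OF Z_loop] loop_left_unit[OF loop loop_unit[OF loop]]
    center_mult_interchange[OF loop] Z_center by blast

lemma ldiv_Z_linear: "Z_linear (ldiv S m)"
  unfolding Z_linear_def
proof (intro conjI ballI)
  show "ldiv S m u u = u"
    using ldiv_unique[OF loop] loop_unit[OF loop] loop_left_unit[OF loop] by metis
next
  fix x y k k' assume xy: "x \<in> S" "y \<in> S" and k: "k \<in> Z" "k' \<in> Z"
  define r where "r = ldiv S m x y"
  define \<rho> where "\<rho> = ldiv S m k k'"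
  have r: "r \<in> S" "m x r = y" using ldiv_closed[OF loop xy] mult_ldiv[OF loop xy] by (simp_all add: r_def)
  have \<rho>: "\<rho> \<in> Z" "m k \<rho> = k'" using ldiv_Z[OF k] mult_ldiv[OF loop Z_mem(1) Z_mem(1)] k by (simp_all add: \<rho>_def)
  have "m (m x k) (m r \<rho>) = m (m x r) (m k \<rho>)"
    using center_mult_interchange[OF loop Z_mem(2)[OF k(1)] Z_mem(2)[OF \<rho>(1)] xy(1) r(1)] .
  then have "m (m x k) (m r \<rho>) = m y k'" using r(2) \<rho>(2) by simp
  then show "ldiv S m (m x k) (m y k') = m (ldiv S m x y) (ldiv S m k k')"
    unfolding r_def[symmetric] \<rho>_def[symmetric]
    using ldiv_unique[OF loop] loop_closed[OF loop] xy r(1) \<rho>(1) k Z_mem(1) by metis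
qed (use ldiv_closed[OF loop] ldiv_Z in auto)

lemma rdiv_Z_linear: "Z_linear (rdiv S m)"
  unfolding Z_linear_def
proof (intro conjI ballI)
  show "rdiv S m u u = u"
    using rdiv_unique[OF loop] loop_unit[OF loop] loop_left_unit[OF loop] by metis
next
  fix x y k k' assume xy: "x \<in> S" "y \<in> S" and k: "k \<in> Z" "k' \<in> Z"
  define r where "r = rdiv S m x y"
  define \<rho> where "\<rho> = rdiv S m k k'"
  have r: "r \<in> S" "m r y = x" using rdiv_closed[OF loop xy(2,1)] rdiv_mult[OF loop xy(2,1)] by (simp_all add: r_def)
  have \<rho>: "\<rho> \<in> Z" "m \<rho> k' = k" using rdiv_Z[OF k(2,1)] rdiv_mult[OF loop Z_mem(1) Z_mem(1)] k by (simp_all add: \<rho>_def)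
  have "m (m r \<rho>) (m y k') = m (m r y) (m \<rho> k')"
    using center_mult_interchange[OF loop Z_mem(2)[OF \<rho>(1)] Z_mem(2)[OF k(2)] r(1) xy(2)] .
  then have "m (m r \<rho>) (m y k') = m x k" using r(2) \<rho>(2) by simp
  then show "rdiv S m (m x k) (m y k') = m (rdiv S m x y) (rdiv S m k k')"
    unfolding r_def[symmetric] \<rho>_def[symmetric]
    using rdiv_unique[OF loop] loop_closed[OF loop] xy r(1) \<rho>(1) k Z_mem(1) by metis
qed (use rdiv_closed[OF loop] rdiv_Z in auto)

definition Z_affine :: "((nat \<Rightarrow> 'a) \<Rightarrow> (nat \<Rightarrow> 'a) \<Rightarrow> 'a) \<Rightarrow> bool" where
  "Z_affine t \<longleftrightarrow> (\<forall>a c. range a \<subseteq> S \<longrightarrow> range c \<subseteq> S \<longrightarrow> t a c \<in> S) \<and>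
     (\<exists>L R. (\<forall>z. range z \<subseteq> Z \<longrightarrow> L z \<in> Z \<and> R z \<in> Z) \<and> L (\<lambda>_. u) = u \<and> R (\<lambda>_. u) = u \<and>
        (\<forall>a c z w. range a \<subseteq> S \<longrightarrow> range c \<subseteq> S \<longrightarrow> range z \<subseteq> Z \<longrightarrow> range w \<subseteq> Z \<longrightarrow>
           t (\<lambda>i. m (a i) (z i)) (\<lambda>i. m (c i) (w i)) = m (m (t a c) (L z)) (R w)))"

lemma Z_affineI:
  assumes "\<And>a c. range a \<subseteq> S \<Longrightarrow> range c \<subseteq> S \<Longrightarrow> t a c \<in> S"
    and "\<And>z. range z \<subseteq> Z \<Longrightarrow> L z \<in> Z" "\<And>z. range z \<subseteq> Z \<Longrightarrow> R z \<in> Z"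
    and "L (\<lambda>_. u) = u" "R (\<lambda>_. u) = u"
    and "\<And>a c z w. range a \<subseteq> S \<Longrightarrow> range c \<subseteq> S \<Longrightarrow> range z \<subseteq> Z \<Longrightarrow> range w \<subseteq> Z \<Longrightarrow>
           t (\<lambda>i. m (a i) (z i)) (\<lambda>i. m (c i) (w i)) = m (m (t a c) (L z)) (R w)"
  shows "Z_affine t"
  unfolding Z_affine_def using assms by blast

lemma Z_linear_shift:
  assumes op: "Z_linear op" and "p \<in> S" "p' \<in> S" "l \<in> Z" "l' \<in> Z" "r \<in> Z" "r' \<in> Z"
  shows "op (m (m p l) r) (m (m p' l') r') = m (m (op p p') (op l l')) (op r r')"
proof -
  have op_S: "\<And>x y. x \<in> S \<Longrightarrow> y \<in> S \<Longrightarrow> op x y \<in> S"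
    and op_Z: "\<And>k k'. k \<in> Z \<Longrightarrow> k' \<in> Z \<Longrightarrow> op k k' \<in> Z"
    and op_shift: "\<And>x y k k'. x \<in> S \<Longrightarrow> y \<in> S \<Longrightarrow> k \<in> Z \<Longrightarrow> k' \<in> Z \<Longrightarrow>
       op (m x k) (m y k') = m (op x y) (op k k')"
    using op unfolding Z_linear_def by blast+
  have "op (m (m p l) r) (m (m p' l') r') = op (m p (m l r)) (m p' (m l' r'))"
    using center_assoc_right Z_mem assms(2-7) by metis
  also have "\<dots> = m (op p p') (op (m l r) (m l' r'))"
    using op_shift loop_closed[OF Z_loop] assms(2-7) by simp
  also have "op (m l r) (m l' r') = m (op l l') (op r r')"
    using op_shift Z_mem assms(2-7) by simp
  also have "m (op p p') (m (op l l') (op r r')) = m (m (op p p') (op l l')) (op r r')"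
    using center_assoc_right[OF Z_mem(2)[OF op_Z]] op_S op_Z Z_mem(1) assms(2-7) by simp
  finally show ?thesis .
qed

lemma Z_affine_op:
  assumes op: "Z_linear op" and "Z_affine t1" "Z_affine t2"
  shows "Z_affine (\<lambda>a c. op (t1 a c) (t2 a c))"
proof -
  obtain L1 R1 where t1: "\<forall>a c. range a \<subseteq> S \<longrightarrow> range c \<subseteq> S \<longrightarrow> t1 a c \<in> S"
      "\<forall>z. range z \<subseteq> Z \<longrightarrow> L1 z \<in> Z \<and> R1 z \<in> Z" "L1 (\<lambda>_. u) = u" "R1 (\<lambda>_. u) = u"
      "\<forall>a c z w. range a \<subseteq> S \<longrightarrow> range c \<subseteq> S \<longrightarrow> range z \<subseteq> Z \<longrightarrow> range w \<subseteq> Z \<longrightarrow>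
         t1 (\<lambda>i. m (a i) (z i)) (\<lambda>i. m (c i) (w i)) = m (m (t1 a c) (L1 z)) (R1 w)"
    using assms(2) unfolding Z_affine_def by blast
  obtain L2 R2 where t2: "\<forall>a c. range a \<subseteq> S \<longrightarrow> range c \<subseteq> S \<longrightarrow> t2 a c \<in> S"
      "\<forall>z. range z \<subseteq> Z \<longrightarrow> L2 z \<in> Z \<and> R2 z \<in> Z" "L2 (\<lambda>_. u) = u" "R2 (\<lambda>_. u) = u"
      "\<forall>a c z w. range a \<subseteq> S \<longrightarrow> range c \<subseteq> S \<longrightarrow> range z \<subseteq> Z \<longrightarrow> range w \<subseteq> Z \<longrightarrow>
         t2 (\<lambda>i. m (a i) (z i)) (\<lambda>i. m (c i) (w i)) = m (m (t2 a c) (L2 z)) (R2 w)"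
    using assms(3) unfolding Z_affine_def by blast
  have op_S: "\<And>x y. x \<in> S \<Longrightarrow> y \<in> S \<Longrightarrow> op x y \<in> S"
    and op_Z: "\<And>k k'. k \<in> Z \<Longrightarrow> k' \<in> Z \<Longrightarrow> op k k' \<in> Z" and op_u: "op u u = u"
    using op unfolding Z_linear_def by blast+
  show ?thesis
  proof (rule Z_affineI[where L = "\<lambda>z. op (L1 z) (L2 z)" and R = "\<lambda>w. op (R1 w) (R2 w)"])
    fix a c z w :: "nat \<Rightarrow> 'a"
    assume "range a \<subseteq> S" "range c \<subseteq> S" "range z \<subseteq> Z" "range w \<subseteq> Z"
    then show "op (t1 (\<lambda>i. m (a i) (z i)) (\<lambda>i. m (c i) (w i))) (t2 (\<lambda>i. m (a i) (z i)) (\<lambda>i. m (c i) (w i)))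
        = m (m (op (t1 a c) (t2 a c)) (op (L1 z) (L2 z))) (op (R1 w) (R2 w))"
      using t1 t2 Z_linear_shift[OF op] by simp
  qed (use op_S op_Z t1 t2 op_u in auto)
qed

lemma loop_terms_Z_affine:
  assumes "t \<in> loop_terms S m u" shows "Z_affine t"
  using assms
proof induction
  case (proj1 i)
  show ?case
    by (rule Z_affineI[where L = "\<lambda>z. z i" and R = "\<lambda>_. u"])
      (use loop_unit[OF Z_loop] in \<open>auto simp: image_subset_iff loop_right_unit[OF loop] loop_closed[OF loop] Z_mem\<close>)
next
  case (proj2 i)
  show ?case
    by (rule Z_affineI[where L = "\<lambda>_. u" and R = "\<lambda>w. w i"])
      (use loop_unit[OF Z_loop] in \<open>auto simp: image_subset_iff loop_right_unit[OF loop]\<close>)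
next
  case unit
  show ?case
    by (rule Z_affineI[where L = "\<lambda>_. u" and R = "\<lambda>_. u"])
      (use loop_unit[OF Z_loop] in \<open>auto simp: loop_right_unit[OF loop] loop_unit[OF loop]\<close>)
next
  case mul
  then show ?case using Z_affine_op[OF mult_Z_linear] by blast
next
  case ld
  then show ?case using Z_affine_op[OF ldiv_Z_linear] by blast
next
  case rd
  then show ?case using Z_affine_op[OF rdiv_Z_linear] by blast
qed

lemma induced_cong_shift:
  assumes "(a, b) \<in> induced_cong S m Z" shows "\<exists>z\<in>Z. b = m a z"
proof -
  have "b \<in> S" "lcoset m a Z = lcoset m b Z" using assms unfolding induced_cong_def by auto
  moreover have "b \<in> lcoset m b Z"
    unfolding lcoset_def using loop_unit[OF Z_loop] loop_right_unit[OF loop \<open>b \<in> S\<close>] by force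
  ultimately show ?thesis unfolding lcoset_def by auto
qed

lemma centralizes_Id_on: "centralizes S m u (induced_cong S m Z) (induced_cong S m Z) (Id_on S)"
  unfolding centralizes_def
proof (intro ballI allI impI)
  fix t a b c d
  assume t: "t \<in> loop_terms S m u"
    and h: "\<forall>i. a i \<in> S \<and> b i \<in> S \<and> c i \<in> S \<and> d i \<in> S
      \<and> (a i, b i) \<in> induced_cong S m Z \<and> (c i, d i) \<in> induced_cong S m Z"
    and eq: "(t a c, t a d) \<in> Id_on S"
  have "\<forall>i. \<exists>z\<in>Z. b i = m (a i) z" "\<forall>i. \<exists>w\<in>Z. d i = m (c i) w" using h induced_cong_shift by blast+
  then obtain z w where z: "range z \<subseteq> Z" "b = (\<lambda>i. m (a i) (z i))"
    and w: "range w \<subseteq> Z" "d = (\<lambda>i. m (c i) (w i))" by (auto simp: image_subset_iff) metis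
  obtain L R where LR: "L (\<lambda>_. u) = u" "R (\<lambda>_. u) = u" "R w \<in> Z"
    and affine: "\<And>z w. range z \<subseteq> Z \<Longrightarrow> range w \<subseteq> Z \<Longrightarrow>
       t (\<lambda>i. m (a i) (z i)) (\<lambda>i. m (c i) (w i)) = m (m (t a c) (L z)) (R w)"
    using loop_terms_Z_affine[OF t] h w(1) unfolding Z_affine_def by (auto simp: image_subset_iff)
  have t_closed: "t a' c' \<in> S" if "range a' \<subseteq> S" "range c' \<subseteq> S" for a' c'
    using loop_terms_Z_affine[OF t] that unfolding Z_affine_def by blast
  have ac: "t a c \<in> S" "t b c \<in> S"
    using h by (auto intro: t_closed)
  have unshifted: "(\<lambda>i. m (a i) u) = a" "(\<lambda>i. m (c i) u) = c"
    using h loop_right_unit[OF loop] by auto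
  have u_range: "range (\<lambda>_. u) \<subseteq> Z" using loop_unit[OF Z_loop] by auto
  \<comment> \<open>\<open>t(a, c w) = t(a, c) R(w)\<close>, so the hypothesis forces \<open>R(w) = u\<close>; then \<open>t(b, c) = t(b, d)\<close>.\<close>
  have "t a d = m (t a c) (R w)"
    using affine[OF u_range w(1)] unfolding unshifted LR(1) w(2)[symmetric]
    by (simp add: loop_right_unit[OF loop ac(1)])
  then have "m (t a c) (R w) = m (t a c) u" using eq loop_right_unit[OF loop ac(1)] by auto
  then have Rw: "R w = u"
    using loop_left_cancel[OF loop ac(1) Z_mem(1)[OF LR(3)] loop_unit[OF loop]] by blast
  have "t b c = m (m (t a c) (L z)) u" "t b d = m (m (t a c) (L z)) (R w)"
    using affine[OF z(1) u_range] affine[OF z(1) w(1)] unfolding unshifted LR(2) z(2) w(2) by simp_all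
  then show "(t b c, t b d) \<in> Id_on S" using Rw ac(2) by auto
qed

theorem abelian_induced_congruence: "abelian_congruence S m u (induced_cong S m Z)"
proof -
  have "loop_congruence S m (Id_on S)"
    unfolding loop_congruence_def equiv_def refl_on_def sym_def trans_def
    using loop_closed[OF loop] ldiv_closed[OF loop] rdiv_closed[OF loop] by auto
  then have "commutator S m u (induced_cong S m Z) (induced_cong S m Z) \<subseteq> Id_on S"
    using centralizes_Id_on unfolding commutator_def by blast
  moreover have "Id_on S \<subseteq> commutator S m u (induced_cong S m Z) (induced_cong S m Z)"
    unfolding commutator_def loop_congruence_def equiv_def refl_on_def by auto
  ultimately show ?thesis unfolding abelian_congruence_def by blast
qed

end

lemma comm_group_abelian_congruence:
  assumes "is_comm_group S m u" shows "abelian_congruence S m u (induced_cong S m S)"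
proof -
  have "loop S m u" using comm_group_loop[OF assms] .
  then interpret central_subloop S m u S using comm_group_center[OF assms] by unfold_locales simp_all
  show ?thesis by (rule abelian_induced_congruence)
qed

lemma not_abelian_congruenceI:
  assumes t: "t \<in> loop_terms S m u"
    and h: "\<forall>i. a i \<in> S \<and> b i \<in> S \<and> c i \<in> S \<and> d i \<in> S \<and> (a i, b i) \<in> \<alpha> \<and> (c i, d i) \<in> \<alpha>"
    and eq: "t a c = t a d" "t a c \<in> S" and ne: "t b c \<noteq> t b d"
  shows "\<not> abelian_congruence S m u \<alpha>"
proof -
  have "(t b c, t b d) \<in> commutator S m u \<alpha> \<alpha>"
    unfolding commutator_def
  proof (rule InterI)
    fix \<delta> assume "\<delta> \<in> {\<delta>. loop_congruence S m \<delta> \<and> centralizes S m u \<alpha> \<alpha> \<delta>}"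
    then have "equiv S \<delta>" "centralizes S m u \<alpha> \<alpha> \<delta>" unfolding loop_congruence_def by auto
    moreover have "(t a c, t a d) \<in> \<delta>" using \<open>equiv S \<delta>\<close> eq unfolding equiv_def refl_on_def by auto
    ultimately show "(t b c, t b d) \<in> \<delta>" using t h unfolding centralizes_def by blast
  qed
  then show ?thesis unfolding abelian_congruence_def using ne by auto
qed

lemma subquot_unit_center:
  assumes "loop S m u" "N \<subseteq> center S m"
  shows "subquot m N {u} \<subseteq> center (qcar S m {u}) (qmul m {u})"
proof
  have N: "N \<subseteq> S" using assms(2) unfolding center_def nucleus_def by blast
  fix X assume "X \<in> subquot m N {u}"
  then obtain x where "x \<in> N" "X = {x}" using subquot_unit[OF assms(1) N] by blast
  then show "X \<in> center (qcar S m {u}) (qmul m {u})"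
    using loop_iso_center[OF loop_iso_singletons[OF assms(1) order_refl] assms(1)] assms(2) N
    unfolding qcar_eq_subquot by blast
qed

lemma subquot_unit_comm_group:
  assumes "loop S m u" "N \<subseteq> S" "is_comm_group N m u"
  shows "is_comm_group (subquot m N {u}) (qmul m {u}) {u}"
  using loop_iso_comm_group[OF loop_iso_singletons[OF assms(1,2)] assms(3)] by simp

lemma subquot_unit_abelian_congruence:
  assumes "loop S m u" "N \<subseteq> center S m" "is_comm_group N m u"
  shows "abelian_congruence (qcar S m {u}) (qmul m {u}) {u}
           (induced_cong (qcar S m {u}) (qmul m {u}) (subquot m N {u}))"
proof -
  have N: "N \<subseteq> S" using assms(2) unfolding center_def nucleus_def by blast
  have "loop (qcar S m {u}) (qmul m {u}) {u}"
    using loop_iso_loop[OF loop_iso_singletons[OF assms(1) order_refl] assms(1)]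
    unfolding qcar_eq_subquot by simp
  moreover note subquot_unit_center[OF assms(1,2)]
  moreover have "loop (subquot m N {u}) (qmul m {u}) {u}"
    using comm_group_loop[OF subquot_unit_comm_group[OF assms(1) N assms(3)]] .
  ultimately interpret central_subloop "qcar S m {u}" "qmul m {u}" "{u}" "subquot m N {u}"
    by unfold_locales
  show ?thesis by (rule abelian_induced_congruence)
qed

lemma two_step_series:
  assumes "loop S m u" "normal_subloop S m u N" "N \<subseteq> S" "u \<in> N" "P S N" "P N {u}"
  shows "\<exists>(Qs :: nat \<Rightarrow> 'a set) n. Qs 0 = S \<and> Qs n = {u} \<and> (\<forall>i\<le>n. normal_subloop S m u (Qs i))
     \<and> (\<forall>i<n. Qs (Suc i) \<subseteq> Qs i \<and> P (Qs i) (Qs (Suc i)))"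
proof -
  define Qs :: "nat \<Rightarrow> 'a set" where "Qs i = (if i = 0 then S else if i = 1 then N else {u})" for i
  have "normal_subloop S m u (Qs i)" if "i \<le> 2" for i
  proof -
    from that consider "i = 0" | "i = 1" | "i = 2" by linarith
    then show ?thesis
      by cases (simp_all add: Qs_def assms(2) normal_subloop_whole[OF assms(1)] normal_subloop_unit[OF assms(1)])
  qed
  moreover have "Qs (Suc i) \<subseteq> Qs i \<and> P (Qs i) (Qs (Suc i))" if "i < 2" for i
  proof -
    from that consider "i = 0" | "i = 1" by linarith
    then show ?thesis by cases (simp_all add: Qs_def assms(3-6))
  qed
  ultimately show ?thesis by (intro exI[of _ Qs] exI[of _ 2]) (simp add: Qs_def)
qed

section \<open>Cosets of an additive subgroup\<close>

locale additive_subgroup =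
  fixes B :: "'a::ab_group_add set"
  assumes zero_mem: "0 \<in> B" and add_mem: "x \<in> B \<Longrightarrow> y \<in> B \<Longrightarrow> x + y \<in> B"
    and uminus_mem: "x \<in> B \<Longrightarrow> - x \<in> B"
begin

lemma diff_mem: "x \<in> B \<Longrightarrow> y \<in> B \<Longrightarrow> x - y \<in> B"
  unfolding diff_conv_add_uminus using add_mem uminus_mem by blast

lemma comm_group: "is_comm_group B (+) 0"
  by (rule comm_groupI) (use zero_mem add_mem uminus_mem in \<open>auto simp: algebra_simps intro: bexI[of _ "- _"]\<close>)

lemma coset_self: "u \<in> coset B u"
  unfolding coset_def using zero_mem by force

lemma coset_eq_iff: "coset B u = coset B v \<longleftrightarrow> u - v \<in> B"
proof
  assume "coset B u = coset B v"
  then obtain b where "b \<in> B" "u = v + b" using coset_self[of u] unfolding coset_def by blast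
  then show "u - v \<in> B" by simp
next
  assume uv: "u - v \<in> B"
  have "v + b \<in> coset B u" "u + b \<in> coset B v" if "b \<in> B" for b
  proof -
    have "v + b = u + (b - (u - v))" "u + b = v + ((u - v) + b)" by (simp_all add: algebra_simps)
    then show "v + b \<in> coset B u" "u + b \<in> coset B v"
      unfolding coset_def using that uv add_mem diff_mem by blast+
  qed
  then show "coset B u = coset B v" unfolding coset_def by blast
qed

lemma coset_add_mem: "b \<in> B \<Longrightarrow> coset B (u + b) = coset B u"
  unfolding coset_eq_iff by simp

lemma coset_eq_B_iff: "coset B u = B \<longleftrightarrow> u \<in> B"
  using coset_eq_iff[of u 0] by (simp add: coset_def)

lemma coset_of_mem: assumes "w \<in> coset B u" shows "coset B w = coset B u"
proof -
  obtain b where "b \<in> B" "w = u + b" using assms unfolding coset_def by blast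
  then show ?thesis using coset_add_mem by simp
qed

lemma coset_in_cosets: "coset B u \<in> cosets B"
  unfolding cosets_def by blast

lemma B_in_cosets: "B \<in> cosets B"
  using coset_in_cosets[of 0] coset_eq_B_iff[of 0] zero_mem by simp

lemma cosetsE: "U \<in> cosets B \<Longrightarrow> (\<And>u. U = coset B u \<Longrightarrow> P) \<Longrightarrow> P"
  unfolding cosets_def by blast

lemma cadd_coset: "cadd (coset B u) (coset B v) = coset B (u + v)"
proof
  show "cadd (coset B u) (coset B v) \<subseteq> coset B (u + v)"
    unfolding cadd_def coset_def
    by (auto simp: algebra_simps intro!: image_eqI[of _ _ "_ + _"] add_mem)
  show "coset B (u + v) \<subseteq> cadd (coset B u) (coset B v)"
  proof
    fix x assume "x \<in> coset B (u + v)"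
    then obtain b where "b \<in> B" "x = (u + b) + (v + 0)" unfolding coset_def by (auto simp: algebra_simps)
    then show "x \<in> cadd (coset B u) (coset B v)" unfolding cadd_def coset_def using zero_mem by blast
  qed
qed

lemma cadd_B: "cadd B (coset B u) = coset B u"
  using cadd_coset[of 0 u] coset_eq_B_iff[of 0] zero_mem by simp

lemma cadd_commute: "cadd U V = cadd V U"
  unfolding cadd_def by (auto; metis add.commute)

lemma cadd_B_right: "cadd (coset B u) B = coset B u"
  using cadd_B cadd_commute by metis

definition rep :: "'a set \<Rightarrow> 'a" where
  "rep U = (if U = B then 0 else SOME x. x \<in> U)"

lemma rep_mem: assumes "U \<in> cosets B" shows "rep U \<in> U"
proof -
  have "U \<noteq> {}" using assms coset_self by (auto elim: cosetsE)
  then show ?thesis using zero_mem unfolding rep_def by (simp add: some_in_eq)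
qed

lemma rep_B: "rep B = 0"
  by (simp add: rep_def)

lemma rep_diff_mem: "u - rep (coset B u) \<in> B"
proof -
  obtain b where "b \<in> B" "rep (coset B u) = u + b"
    using rep_mem[OF coset_in_cosets] unfolding coset_def by blast
  then show ?thesis using uminus_mem by simp
qed

lemma coset_rep: "U \<in> cosets B \<Longrightarrow> coset B (rep U) = U"
  using rep_mem coset_of_mem by (metis cosetsE)

end

section \<open>The loop \<open>Q(F, B, W, q)\<close>\<close>

locale quadratic_loop = additive_subgroup B for B :: "'a::ab_group_add set" +
  fixes e :: 'a and qb :: "'a set \<Rightarrow> 'a"
  assumes e_nonzero: "e \<noteq> 0" and e_order2: "e + e = 0" and e_mem: "e \<in> B"
    and double_mem: "u + u \<in> B" and quadratic: "is_quadratic_form e B qb"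
begin

abbreviation "Q \<equiv> Qcar e"
abbreviation "M \<equiv> Qmul e B qb"

text \<open>Identities of \<open>Q\<close> are reduced to Boolean algebra: \<open>F_of\<close> identifies \<open>bool\<close> with
  \<open>F = {0, e}\<close>, elements of \<open>W\<close> are kept in the form \<open>nf x p = x + F_of p\<close>, and \<open>qbit\<close>,
  \<open>hbit\<close> are the \<open>F\<close>-valued forms \<open>q\<close>, \<open>h\<close> read as truth values.\<close>
definition F_of :: "bool \<Rightarrow> 'a" where "F_of p = (if p then e else 0)"
definition nf :: "'a \<Rightarrow> bool \<Rightarrow> 'a" where "nf x p = x + F_of p"
definition qbit :: "'a \<Rightarrow> bool" where "qbit u \<longleftrightarrow> qlift B qb u = e"
definition hbit :: "'a \<Rightarrow> 'a \<Rightarrow> bool" where "hbit u v \<longleftrightarrow> hlift B qb u v = e"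

lemma F_of_simps [simp]: "F_of False = 0" "F_of True = e"
  by (simp_all add: F_of_def)

lemma F_of_add: "F_of p + F_of q = F_of (p \<noteq> q)"
  using e_order2 by (cases p; cases q) simp_all

lemma F_of_eq_iff: "F_of p = F_of q \<longleftrightarrow> (p \<longleftrightarrow> q)"
  using e_nonzero by (cases p; cases q) auto

lemma F_of_eq_0_iff: "F_of p = 0 \<longleftrightarrow> \<not> p" and F_of_eq_e_iff: "F_of p = e \<longleftrightarrow> p"
  using e_nonzero by (cases p; simp)+

lemma F_of_mem: "F_of p \<in> B"
  using zero_mem e_mem by (cases p) simp_all

lemma F_of_diff: "F_of p - F_of q = F_of (p \<noteq> q)"
proof -
  have "- F_of q = F_of q" using e_order2 by (cases q) (simp_all add: add_eq_0_iff)
  then show ?thesis unfolding diff_conv_add_uminus by (simp only: F_of_add)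
qed

lemma F2mul_F_of: "F2mul e (F_of p) (F_of q) = F_of (p \<and> q)"
  using e_nonzero by (cases p; cases q) (simp_all add: F2mul_def)

lemma F_of_cases: "i \<in> {0, e} \<Longrightarrow> i = F_of (i = e)"
  using e_nonzero by auto

lemma nf_False [simp]: "nf x False = x"
  by (simp add: nf_def)

lemma nf_eq_imp: assumes "nf x p = nf y q" shows "x = y + F_of (p \<noteq> q)"
proof -
  have "x = y + (F_of q - F_of p)" using assms unfolding nf_def by (simp add: algebra_simps)
  then show ?thesis unfolding F_of_diff by (cases p; cases q) auto
qed

lemma nf_pair_eqI: "(a \<longleftrightarrow> b) \<Longrightarrow> x = y \<Longrightarrow> (p \<longleftrightarrow> q) \<Longrightarrow> (F_of a, nf x p) = (F_of b, nf y q)"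
  by simp

lemma qb_B: "qb B = 0"
proof -
  have "qb (csmul e B 0 B) = F2mul e (F2mul e 0 0) (qb B)"
    using quadratic B_in_cosets unfolding is_quadratic_form_def by blast
  then show ?thesis using e_nonzero by (simp add: csmul_def F2mul_def)
qed

lemma qb_in_F: "U \<in> cosets B \<Longrightarrow> qb U \<in> {0, e}"
  using quadratic unfolding is_quadratic_form_def by blast

lemma qlift_F_of: "qlift B qb u = F_of (qbit u)"
  using F_of_cases qb_in_F[OF coset_in_cosets] unfolding qbit_def qlift_def by blast

lemma hlift_eq: "hlift B qb u v = qlift B qb (u + v) - qlift B qb u - qlift B qb v"
  unfolding hlift_def qlift_def assoc_bilin_def cadd_coset ..

lemma hbit_eq: "hbit u v \<longleftrightarrow> (qbit (u + v) \<noteq> qbit u) \<noteq> qbit v"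
  unfolding hbit_def hlift_eq qlift_F_of F_of_diff F_of_eq_e_iff ..

lemma hlift_F_of: "hlift B qb u v = F_of (hbit u v)"
  unfolding hlift_eq qlift_F_of F_of_diff hbit_eq ..

lemma qbit_add: "qbit (u + v) \<longleftrightarrow> (hbit u v \<noteq> qbit u) \<noteq> qbit v"
  unfolding hbit_eq by auto

lemma qbit_add_mem: "b \<in> B \<Longrightarrow> qbit (u + b) = qbit u"
  unfolding qbit_def qlift_def coset_add_mem by simp

lemma qbit_mem: assumes "b \<in> B" shows "\<not> qbit b"
  using assms e_nonzero unfolding qbit_def qlift_def coset_eq_B_iff[symmetric] by (simp add: qb_B)

lemma hbit_commute: "hbit u v = hbit v u"
  unfolding hbit_eq add.commute[of v u] by auto

lemma hbit_add_mem: "b \<in> B \<Longrightarrow> hbit (u + b) v = hbit u v"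
  unfolding hbit_eq using qbit_add_mem[of b u] qbit_add_mem[of b "u + v"] by (simp add: algebra_simps)

lemma hbit_mem: "b \<in> B \<Longrightarrow> \<not> hbit b v"
  using hbit_add_mem[of b 0 v] zero_mem unfolding hbit_eq by (simp add: qbit_mem)

lemma hbit_self: "\<not> hbit u u"
  unfolding hbit_eq using qbit_mem[OF double_mem] by simp

lemma hbit_add_left: "hbit (u + v) w \<longleftrightarrow> hbit u w \<noteq> hbit v w"
proof -
  have "assoc_bilin qb (cadd (coset B u) (coset B v)) (coset B w)
     = assoc_bilin qb (coset B u) (coset B w) + assoc_bilin qb (coset B v) (coset B w)"
    using quadratic coset_in_cosets unfolding is_quadratic_form_def by blast
  then have "hlift B qb (u + v) w = hlift B qb u w + hlift B qb v w"
    unfolding hlift_def cadd_coset .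
  then show ?thesis unfolding hlift_F_of F_of_add F_of_eq_iff .
qed

lemma hbit_add_right: "hbit w (u + v) \<longleftrightarrow> hbit w u \<noteq> hbit w v"
  using hbit_add_left hbit_commute by metis

lemma qbit_hbit_F_of:
  "qbit (x + F_of p) = qbit x" "hbit (x + F_of p) y = hbit x y" "hbit y (x + F_of p) = hbit y x"
  using qbit_add_mem hbit_add_mem hbit_commute F_of_mem by metis+

lemma qbit_hbit_zero [simp]: "\<not> qbit 0" "\<not> hbit 0 x" "\<not> hbit x 0"
  using qbit_mem hbit_mem hbit_commute zero_mem by metis+

lemmas bit_expansions = qbit_add hbit_add_left hbit_add_right hbit_self

lemma Qmul_nf: "M (F_of a, nf x p) (F_of b, nf y q)
   = (F_of (a \<noteq> b), nf (x + y) ((p \<noteq> q) \<noteq> ((b \<and> qbit x) \<noteq> (a \<and> hbit x y))))"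
proof -
  have "x + F_of p + (y + F_of q) + F_of (b \<and> qbit x) + F_of (a \<and> hbit x y)
     = (x + y) + (((F_of p + F_of q) + F_of (b \<and> qbit x)) + F_of (a \<and> hbit x y))"
    by (simp add: algebra_simps)
  moreover have "M (F_of a, nf x p) (F_of b, nf y q) =
     (F_of a + F_of b, x + F_of p + (y + F_of q) + F_of (b \<and> qbit x) + F_of (a \<and> hbit x y))"
    unfolding Qmul_def nf_def by (simp add: qlift_F_of hlift_F_of F2mul_F_of qbit_hbit_F_of)
  ultimately show ?thesis unfolding nf_def F_of_add by (simp add: F_of_eq_iff, blast)
qed

lemma Qcar_nfE: assumes "x \<in> Q" obtains a u where "x = (F_of a, nf u False)"
  using assms F_of_cases unfolding Qcar_def by (metis SigmaE nf_False)

lemma Qcar_iff: "(i, y) \<in> Q \<longleftrightarrow> i = 0 \<or> i = e"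
  unfolding Qcar_def by simp

lemma F_of_in_Qcar [simp]: "(F_of a, y) \<in> Q"
  by (cases a) (auto simp: Qcar_iff)

lemma unit_nf: "(0, 0) = (F_of False, nf 0 False)"
  by simp

lemma Qmul_nf_left_cancel:
  assumes "M (F_of a, nf u False) (F_of b, nf v False) = M (F_of a, nf u False) (F_of c, nf w False)"
  shows "(F_of b, nf v False) = (F_of c, nf w False)"
proof -
  from assms have bc: "b = c"
    and eq: "nf (u + v) ((b \<and> qbit u) \<noteq> (a \<and> hbit u v)) = nf (u + w) ((c \<and> qbit u) \<noteq> (a \<and> hbit u w))"
    unfolding Qmul_nf by (auto simp: F_of_eq_iff)
  have "v = w + F_of (((b \<and> qbit u) \<noteq> (a \<and> hbit u v)) \<noteq> ((c \<and> qbit u) \<noteq> (a \<and> hbit u w)))"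
    using nf_eq_imp[OF eq] by (simp add: algebra_simps)
  then have "hbit u v = hbit u w" using qbit_hbit_F_of(3) by metis
  then show ?thesis using eq bc unfolding nf_def by simp
qed

lemma Qmul_nf_right_cancel:
  assumes "M (F_of b, nf v False) (F_of a, nf u False) = M (F_of c, nf w False) (F_of a, nf u False)"
  shows "(F_of b, nf v False) = (F_of c, nf w False)"
proof -
  from assms have bc: "b = c"
    and eq: "nf (v + u) ((a \<and> qbit v) \<noteq> (b \<and> hbit v u)) = nf (w + u) ((a \<and> qbit w) \<noteq> (c \<and> hbit w u))"
    unfolding Qmul_nf by (auto simp: F_of_eq_iff)
  have "v = w + F_of (((a \<and> qbit v) \<noteq> (b \<and> hbit v u)) \<noteq> ((a \<and> qbit w) \<noteq> (c \<and> hbit w u)))"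
    using nf_eq_imp[OF eq] by (simp add: algebra_simps)
  then have "hbit v u = hbit w u" "qbit v = qbit w" using qbit_hbit_F_of(1,2) by metis+
  then show ?thesis using eq bc unfolding nf_def by simp
qed

lemma Q_loop: "loop Q M (0, 0)"
  unfolding loop_iff
proof (intro conjI ballI)
  show "(0, 0) \<in> Q" using F_of_in_Qcar[of False] by simp
next
  fix x y assume "x \<in> Q" "y \<in> Q"
  then obtain a u b v where xy: "x = (F_of a, nf u False)" "y = (F_of b, nf v False)"
    by (metis Qcar_nfE)
  show "M x y \<in> Q" unfolding xy Qmul_nf by simp
  show "\<exists>z\<in>Q. M x z = y"
  proof
    show "M x (F_of (a \<noteq> b), nf (v - u) (((a \<noteq> b) \<and> qbit u) \<noteq> (a \<and> hbit u (v - u)))) = y"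
      unfolding xy Qmul_nf by (rule nf_pair_eqI) auto
  qed simp
  show "\<exists>z\<in>Q. M z x = y"
  proof
    show "M (F_of (a \<noteq> b), nf (v - u) ((a \<and> qbit (v - u)) \<noteq> ((a \<noteq> b) \<and> hbit (v - u) u))) x = y"
      unfolding xy Qmul_nf by (rule nf_pair_eqI) auto
  qed simp
next
  fix x assume "x \<in> Q"
  then obtain a u where x: "x = (F_of a, nf u False)" by (metis Qcar_nfE)
  show "M (0, 0) x = x" "M x (0, 0) = x"
    unfolding x unit_nf Qmul_nf by (rule nf_pair_eqI; simp)+
next
  fix x y z assume "x \<in> Q" "y \<in> Q" "z \<in> Q"
  then obtain a u b v c w where xyz: "x = (F_of a, nf u False)" "y = (F_of b, nf v False)"
    "z = (F_of c, nf w False)"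
    by (metis Qcar_nfE)
  show "M x y = M x z \<longrightarrow> y = z" "M y x = M z x \<longrightarrow> y = z"
    unfolding xyz using Qmul_nf_left_cancel Qmul_nf_right_cancel by simp_all
qed

lemma Qmul_associator:
  "M (M (F_of a, nf u False) (F_of b, nf v False)) (F_of c, nf w False)
   = M (M (F_of a, nf u False) (M (F_of b, nf v False) (F_of c, nf w False)))
       (F_of False, nf 0 (((c \<and> hbit u v) \<noteq> (a \<and> hbit v w)) \<noteq> (b \<and> hbit u w)))"
  unfolding Qmul_nf
  by (rule nf_pair_eqI) (blast, simp add: algebra_simps,
      simp add: bit_expansions hbit_commute[of v u] hbit_commute[of w u] hbit_commute[of w v], argo)

lemma Qmul_extra_law:
  "M (F_of a, nf u False) (M (F_of b, nf v False) (M (F_of c, nf w False) (F_of a, nf u False)))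
   = M (M (M (F_of a, nf u False) (F_of b, nf v False)) (F_of c, nf w False)) (F_of a, nf u False)"
  unfolding Qmul_nf
  by (rule nf_pair_eqI) (blast, simp add: algebra_simps,
      simp add: bit_expansions hbit_commute[of v u] hbit_commute[of w u] hbit_commute[of w v], argo)

lemma Q_extra_loop: "extra_loop Q M (0, 0)"
  unfolding extra_loop_def
proof (intro conjI ballI)
  show "loop Q M (0, 0)" by (rule Q_loop)
  fix x y z assume "x \<in> Q" "y \<in> Q" "z \<in> Q"
  then obtain a u b v c w where "x = (F_of a, nf u False)" "y = (F_of b, nf v False)"
    "z = (F_of c, nf w False)"
    by (metis Qcar_nfE)
  then show "M x (M y (M z x)) = M (M (M x y) z) x" by (simp only: Qmul_extra_law)
qed

lemma Q_assoc_iff_hbit: "(\<forall>x\<in>Q. \<forall>y\<in>Q. \<forall>z\<in>Q. M x (M y z) = M (M x y) z) \<longleftrightarrow> (\<forall>u v. \<not> hbit u v)"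
proof
  assume assoc: "\<forall>x\<in>Q. \<forall>y\<in>Q. \<forall>z\<in>Q. M x (M y z) = M (M x y) z"
  show "\<forall>u v. \<not> hbit u v"
  proof (intro allI)
    fix u v
    let ?p = "M (F_of False, nf u False) (M (F_of False, nf v False) (F_of True, nf 0 False))"
    have p: "?p \<in> Q" unfolding Qmul_nf by (simp add: Qcar_iff)
    have "M ?p (F_of False, nf 0 (hbit u v)) = M ?p (0, 0)"
      using Qmul_associator[of False u False v True 0] assoc loop_right_unit[OF Q_loop p]
      by (simp add: Qcar_iff)
    then have "(F_of False, nf 0 (hbit u v)) = (0, 0)"
      by (rule loop_left_cancel[OF Q_loop p F_of_in_Qcar loop_unit[OF Q_loop]])
    then show "\<not> hbit u v" unfolding nf_def by (simp add: F_of_eq_0_iff)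
  qed
next
  assume no_hbit: "\<forall>u v. \<not> hbit u v"
  show "\<forall>x\<in>Q. \<forall>y\<in>Q. \<forall>z\<in>Q. M x (M y z) = M (M x y) z"
  proof (intro ballI)
    fix x y z assume "x \<in> Q" "y \<in> Q" "z \<in> Q"
    then obtain a u b v c w where xyz: "x = (F_of a, nf u False)" "y = (F_of b, nf v False)"
      "z = (F_of c, nf w False)"
      by (metis Qcar_nfE)
    have p: "M x (M y z) \<in> Q" unfolding xyz Qmul_nf by simp
    show "M x (M y z) = M (M x y) z"
      unfolding xyz Qmul_associator[of a u b v c w] using no_hbit loop_right_unit[OF Q_loop p]
      unfolding xyz unit_nf by simp
  qed
qed


lemma linear_form_iff_hbit: "is_linear_form e B qb \<longleftrightarrow> (\<forall>u v. \<not> hbit u v)"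
proof
  assume lin: "is_linear_form e B qb"
  show "\<forall>u v. \<not> hbit u v"
  proof (intro allI)
    fix u v
    have "qb (cadd (coset B u) (coset B v)) = qb (coset B u) + qb (coset B v)"
      using lin coset_in_cosets unfolding is_linear_form_def by blast
    then have "hlift B qb u v = 0" unfolding hlift_def assoc_bilin_def by simp
    then show "\<not> hbit u v" unfolding hbit_def using e_nonzero by simp
  qed
next
  assume no_hbit: "\<forall>u v. \<not> hbit u v"
  show "is_linear_form e B qb" unfolding is_linear_form_def
  proof (intro conjI ballI)
    fix U V assume "U \<in> cosets B" "V \<in> cosets B"
    then obtain u v where uv: "U = coset B u" "V = coset B v" by (metis cosetsE)
    have "qlift B qb (u + v) = qlift B qb u + qlift B qb v"
      unfolding qlift_F_of F_of_add qbit_add using no_hbit by simp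
    then show "qb (cadd U V) = qb U + qb V" unfolding uv cadd_coset qlift_def .
  next
    fix l U assume "l \<in> {0, e}" "U \<in> cosets B"
    then show "qb (csmul e B l U) = F2mul e l (qb U)"
      using qb_in_F[of U] e_nonzero by (auto simp: csmul_def F2mul_def qb_B)
  qed
qed

lemma Q_group_iff_linear: "is_group Q M (0, 0) \<longleftrightarrow> is_linear_form e B qb"
  unfolding is_group_def linear_form_iff_hbit Q_assoc_iff_hbit[symmetric] using Q_loop by blast

lemma fst_Qmul: "fst (M x y) = fst x + fst y"
  unfolding Qmul_def by (simp add: case_prod_beta)

lemma F_comm_group: "is_comm_group {0, e} (+) 0"
  by (rule comm_groupI) (use e_order2 in \<open>auto simp: algebra_simps\<close>)

lemma zero_times_comm_group:
  assumes "is_comm_group T (+) 0" shows "is_comm_group ({0} \<times> T) M (0, 0)"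
proof -
  have "loop_iso T (+) ({0} \<times> T) M (Pair 0)"
    by (rule loop_isoI) (use e_nonzero in \<open>auto simp: bij_betw_def inj_on_def Qmul_def F2mul_def\<close>)
  from loop_iso_comm_group[OF this assms] show ?thesis by simp
qed

abbreviation "X \<equiv> {0::'a} \<times> (UNIV :: 'a set)"

lemma X_comm_group: "is_comm_group X M (0, 0)"
proof -
  interpret UNIV: additive_subgroup "UNIV :: 'a set" by unfold_locales simp_all
  show ?thesis using zero_times_comm_group[OF UNIV.comm_group] .
qed

lemma X_normal: "normal_subloop Q M (0, 0) X"
proof -
  have "loop_hom Q M {0, e} (+) fst" unfolding loop_hom_def fst_Qmul Qcar_def by auto
  moreover have "fst ` Q = {0, e}" unfolding Qcar_def by auto
  ultimately have "normal_subloop Q M (0, 0) {x \<in> Q. fst x = 0}"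
    by (rule normal_subloop_kernel[OF comm_group_loop[OF F_comm_group]])
  moreover have "{x \<in> Q. fst x = 0} = X" unfolding Qcar_def by auto
  ultimately show ?thesis by simp
qed

lemma induced_cong_X: "p \<in> Q \<Longrightarrow> q \<in> Q \<Longrightarrow> fst p = fst q \<Longrightarrow> (p, q) \<in> induced_cong Q M X"
proof -
  have lcoset: "lcoset M p X = {fst p} \<times> UNIV" if p: "p \<in> Q" for p
  proof
    show "lcoset M p X \<subseteq> {fst p} \<times> UNIV"
    proof
      fix q assume "q \<in> lcoset M p X"
      then obtain n where "fst n = 0" "q = M p n" unfolding lcoset_def by auto
      then show "q \<in> {fst p} \<times> UNIV" using fst_Qmul[of p n] by (simp add: mem_Times_iff)
    qed
    show "{fst p} \<times> UNIV \<subseteq> lcoset M p X"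
    proof
      fix q assume q: "q \<in> {fst p} \<times> (UNIV :: 'a set)"
      then have "q \<in> Q" using p by (auto simp: Qcar_def)
      then obtain y where "y \<in> Q" "M p y = q" using loop_left_solvable[OF Q_loop p] by blast
      moreover from this have "y \<in> X" using q fst_Qmul[of p y] by (cases y) auto
      ultimately show "q \<in> lcoset M p X" unfolding lcoset_def by blast
    qed
  qed
  assume "p \<in> Q" "q \<in> Q" "fst p = fst q"
  then show ?thesis unfolding induced_cong_def using lcoset by auto
qed

lemma ldiv_associator:
  "ldiv Q M (M (F_of True, nf 0 False) (M (F_of False, nf x False) (F_of False, nf y False)))
     (M (M (F_of True, nf 0 False) (F_of False, nf x False)) (F_of False, nf y False))
   = (F_of False, nf 0 (hbit x y))"
proof -
  let ?p = "M (F_of True, nf 0 False) (M (F_of False, nf x False) (F_of False, nf y False))"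
  have p: "?p \<in> Q" unfolding Qmul_nf by (simp add: Qcar_iff)
  have "M ?p (F_of False, nf 0 (hbit x y))
    = M (M (F_of True, nf 0 False) (F_of False, nf x False)) (F_of False, nf y False)"
    unfolding Qmul_associator by simp
  from ldiv_unique[OF Q_loop p F_of_in_Qcar this] show ?thesis by simp
qed

text \<open>The witness for (vi) is the term \<open>t(x, y) = (y\<^sub>0 (x\<^sub>0 y\<^sub>1)) \ ((y\<^sub>0 x\<^sub>0) y\<^sub>1)\<close>:
  by the associator formula it equals \<open>(0, h(x\<^sub>0, y\<^sub>1))\<close> when \<open>y\<^sub>0 = (e, 0)\<close>, so it vanishes when
  \<open>x\<^sub>0 \<in> B\<close> but not for \<open>x\<^sub>0 = u, y\<^sub>1 = v\<close> with \<open>h(u, v) \<noteq> 0\<close>.\<close>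
lemma X_not_abelian:
  assumes "\<not> is_group Q M (0, 0)"
  shows "\<not> abelian_congruence Q M (0, 0) (induced_cong Q M X)"
proof -
  obtain u v where huv: "hbit u v" using assms Q_assoc_iff_hbit Q_loop unfolding is_group_def by blast
  define t :: "(nat \<Rightarrow> 'a \<times> 'a) \<Rightarrow> (nat \<Rightarrow> 'a \<times> 'a) \<Rightarrow> 'a \<times> 'a" where
    "t = (\<lambda>x y. ldiv Q M (M (y 0) (M (x 0) (y 1))) (M (M (y 0) (x 0)) (y 1)))"
  have t: "t \<in> loop_terms Q M (0, 0)" unfolding t_def
    by (intro loop_terms.ld loop_terms.mul loop_terms.proj1 loop_terms.proj2)
  have t_value: "t (\<lambda>_. (F_of False, nf x False)) (\<lambda>i. if i = 0 then (F_of True, nf 0 False) else (F_of False, nf y False))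
     = (F_of False, nf 0 (hbit x y))" for x y
    unfolding t_def using ldiv_associator by simp
  define a :: "nat \<Rightarrow> 'a \<times> 'a" where "a = (\<lambda>_. (F_of False, nf 0 False))"
  define b :: "nat \<Rightarrow> 'a \<times> 'a" where "b = (\<lambda>_. (F_of False, nf u False))"
  define c :: "nat \<Rightarrow> 'a \<times> 'a" where
    "c = (\<lambda>i. if i = 0 then (F_of True, nf 0 False) else (F_of False, nf 0 False))"
  define d :: "nat \<Rightarrow> 'a \<times> 'a" where
    "d = (\<lambda>i. if i = 0 then (F_of True, nf 0 False) else (F_of False, nf v False))"
  have related: "\<forall>i. a i \<in> Q \<and> b i \<in> Q \<and> c i \<in> Q \<and> d i \<in> Q \<and> (a i, b i) \<in> induced_cong Q M X
     \<and> (c i, d i) \<in> induced_cong Q M X"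
    unfolding a_def b_def c_def d_def using induced_cong_X by (auto simp: Qcar_iff)
  have t_values: "t a c = (F_of False, nf 0 False)" "t a d = (F_of False, nf 0 False)"
    "t b c = (F_of False, nf 0 False)" "t b d = (F_of False, nf 0 True)"
    unfolding a_def b_def c_def d_def t_value using huv by simp_all
  have ne: "t b c \<noteq> t b d" unfolding t_values nf_def using e_nonzero by simp
  show ?thesis by (rule not_abelian_congruenceI[OF t related _ _ ne]) (simp_all add: t_values Qcar_iff)
qed


abbreviation "FW \<equiv> FWbar_car e B"
abbreviation "N \<equiv> {0::'a} \<times> B"

lemma coset_double: "coset B (u + u) = B"
  using coset_eq_B_iff double_mem by blast

lemma FWbar_carE:
  assumes "x \<in> FW" obtains i u where "x = (i, coset B u)" "i \<in> {0, e}"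
  using assms unfolding FWbar_car_def cosets_def by blast

lemma FWbar_comm_group: "is_comm_group FW FWbar_mul (0, B)"
proof (rule comm_groupI)
  show "(0, B) \<in> FW" unfolding FWbar_car_def using B_in_cosets by blast
next
  fix x y assume "x \<in> FW" "y \<in> FW"
  then obtain i u j v where xy: "x = (i, coset B u)" "y = (j, coset B v)" "i \<in> {0, e}" "j \<in> {0, e}"
    by (metis FWbar_carE)
  show "FWbar_mul x y \<in> FW" "FWbar_mul x y = FWbar_mul y x"
    using xy e_order2 coset_in_cosets
    by (auto simp: FWbar_mul_def FWbar_car_def cadd_coset add.commute)
next
  fix x assume x: "x \<in> FW"
  then obtain i u where xu: "x = (i, coset B u)" "i \<in> {0, e}" by (metis FWbar_carE)
  show "FWbar_mul (0, B) x = x" unfolding xu FWbar_mul_def using cadd_B by simp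
  have "FWbar_mul x x = (0, B)"
    using xu e_order2 by (auto simp: FWbar_mul_def cadd_coset coset_double)
  then show "\<exists>y\<in>FW. FWbar_mul x y = (0, B)" using x by blast
next
  fix x y z assume "x \<in> FW" "y \<in> FW" "z \<in> FW"
  then obtain i u j v k w where "x = (i, coset B u)" "y = (j, coset B v)" "z = (k, coset B w)"
    by (metis FWbar_carE)
  then show "FWbar_mul x (FWbar_mul y z) = FWbar_mul (FWbar_mul x y) z"
    by (simp add: FWbar_mul_def cadd_coset algebra_simps)
qed

lemma FWbar_square: "x \<in> FW \<Longrightarrow> FWbar_mul x x = (0, B)"
  using e_order2 by (auto elim!: FWbar_carE simp: FWbar_mul_def cadd_coset coset_double)

lemma F2mul_mem: "F2mul e x y \<in> B"
  unfolding F2mul_def using zero_mem e_mem by auto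

lemma snd_Qmul:
  "snd (M (i, u) (j, v)) = u + v + F2mul e j (qb (coset B u)) + F2mul e i (assoc_bilin qb (coset B u) (coset B v))"
  unfolding Qmul_def qlift_def hlift_def by simp

lemma coset_snd_Qmul: "coset B (snd (M (i, u) (j, v))) = coset B (u + v)"
  unfolding snd_Qmul using coset_add_mem F2mul_mem by simp

definition proj :: "'a \<times> 'a \<Rightarrow> 'a \<times> 'a set" where
  "proj x = (fst x, coset B (snd x))"

lemma proj_hom: "loop_hom Q M FW FWbar_mul proj"
  unfolding loop_hom_def proj_def
proof (intro conjI ballI)
  fix x assume "x \<in> Q"
  then show "(fst x, coset B (snd x)) \<in> FW" unfolding Qcar_def FWbar_car_def using coset_in_cosets by auto
next
  fix x y :: "'a \<times> 'a"
  show "(fst (M x y), coset B (snd (M x y))) = FWbar_mul (fst x, coset B (snd x)) (fst y, coset B (snd y))"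
    using coset_snd_Qmul[of "fst x" "snd x" "fst y" "snd y"] by (simp add: FWbar_mul_def fst_Qmul cadd_coset)
qed

lemma proj_onto: "proj ` Q = FW"
  unfolding proj_def FWbar_car_def Qcar_def cosets_def by force

lemma proj_fibre_unit: "{x \<in> Q. proj x = (0, B)} = N"
  unfolding proj_def Qcar_def by (auto simp: coset_eq_B_iff)

lemma N_normal: "normal_subloop Q M (0, 0) N"
  using normal_subloop_kernel[OF comm_group_loop[OF FWbar_comm_group] proj_hom proj_onto]
  unfolding proj_fibre_unit .

lemma lcoset_N: assumes "x \<in> Q" shows "lcoset M x N = {y \<in> Q. proj y = proj x}"
proof -
  obtain i u where x: "x = (i, u)" "i \<in> {0, e}" using assms unfolding Qcar_def by auto
  have "lcoset M x N = (\<lambda>b. M (i, u) (0, b)) ` B" unfolding lcoset_def x by auto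
  also have "\<dots> = (\<lambda>b. (i, u + b)) ` B"
    unfolding Qmul_def F2mul_def hlift_F_of using e_nonzero hbit_mem hbit_commute
    by (intro image_cong) auto
  also have "\<dots> = {y \<in> Q. proj y = proj x}"
  proof (intro equalityI subsetI)
    fix y assume "y \<in> (\<lambda>b. (i, u + b)) ` B"
    then obtain b where "b \<in> B" "y = (i, u + b)" by blast
    then show "y \<in> {y \<in> Q. proj y = proj x}" using x coset_add_mem by (auto simp: proj_def Qcar_iff)
  next
    fix y assume "y \<in> {y \<in> Q. proj y = proj x}"
    then have "fst y = i" "snd y - u \<in> B" using x by (auto simp: proj_def coset_eq_iff)
    then have "y = (i, u + (snd y - u))" "snd y - u \<in> B" by auto
    then show "y \<in> (\<lambda>b. (i, u + b)) ` B" by blast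
  qed
  finally show ?thesis .
qed

lemma quotient_N_comm_group: "is_comm_group (qcar Q M N) (qmul M N) N"
proof -
  have "loop_iso FW FWbar_mul (qcar Q M N) (qmul M N) (\<lambda>t. {y \<in> Q. proj y = t})"
    using loop_iso_fibres_quotient[OF Q_loop proj_hom proj_onto lcoset_N] .
  from loop_iso_comm_group[OF this FWbar_comm_group] show ?thesis unfolding proj_fibre_unit .
qed

lemma N_comm_group: "is_comm_group N M (0, 0)"
  using zero_times_comm_group[OF comm_group] .

lemma N_subset: "N \<subseteq> Q"
  unfolding Qcar_def by auto

lemma Qmul_assoc_if:
  assumes "\<not> (((c \<and> hbit u v) \<noteq> (a \<and> hbit v w)) \<noteq> (b \<and> hbit u w))"
  shows "M (F_of a, nf u False) (M (F_of b, nf v False) (F_of c, nf w False))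
    = M (M (F_of a, nf u False) (F_of b, nf v False)) (F_of c, nf w False)"
proof -
  have "M (F_of a, nf u False) (M (F_of b, nf v False) (F_of c, nf w False)) \<in> Q"
    unfolding Qmul_nf by simp
  then show ?thesis unfolding Qmul_associator using assms loop_right_unit[OF Q_loop]
    by (simp only: unit_nf[symmetric])
qed

lemma N_center: "N \<subseteq> center Q M"
proof
  fix x assume "x \<in> N"
  then obtain b where b: "b \<in> B" "x = (F_of False, nf b False)" by auto
  show "x \<in> center Q M" unfolding center_def nucleus_def
  proof (intro CollectI conjI ballI)
    show "x \<in> Q" using b by (simp add: Qcar_iff)
  next
    fix y z assume "y \<in> Q" "z \<in> Q"
    then obtain a u c w where yz: "y = (F_of a, nf u False)" "z = (F_of c, nf w False)"
      by (metis Qcar_nfE)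
    show "M x (M y z) = M (M x y) z" "M y (M x z) = M (M y x) z" "M y (M z x) = M (M y z) x"
      unfolding b(2) yz by (rule Qmul_assoc_if; use b in \<open>simp add: hbit_mem hbit_commute[of _ b]\<close>)+
  next
    fix y assume "y \<in> Q"
    then obtain a u where y: "y = (F_of a, nf u False)" by (metis Qcar_nfE)
    show "M x y = M y x" unfolding y b(2) Qmul_nf
      by (rule nf_pair_eqI) (use b in \<open>simp_all add: qbit_mem hbit_mem hbit_commute[of _ b] add.commute\<close>)
  qed
qed


text \<open>Writing \<open>x = (i, rep (u + B) + b)\<close> identifies \<open>Q\<close> with \<open>(F \<times> W/B) \<times> B\<close>; \<open>cocycle\<close> is the
  resulting correction term of the multiplication.\<close>
definition cocycle :: "'a \<times> 'a set \<Rightarrow> 'a \<times> 'a set \<Rightarrow> 'a" where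
  "cocycle r s = rep (snd r) + rep (snd s) - rep (cadd (snd r) (snd s))
     + F2mul e (fst s) (qb (snd r)) + F2mul e (fst r) (assoc_bilin qb (snd r) (snd s))"

definition coords :: "'a \<times> 'a \<Rightarrow> ('a \<times> 'a set) \<times> 'a" where
  "coords x = (proj x, snd x - rep (coset B (snd x)))"

lemma cocycle_unit: "r \<in> FW \<Longrightarrow> cocycle (0, B) r = 0 \<and> cocycle r (0, B) = 0"
  using e_nonzero
  by (auto elim!: FWbar_carE simp: cocycle_def cadd_B cadd_B_right rep_B qb_B assoc_bilin_def F2mul_def)

lemma cocycle_mem: "r \<in> FW \<Longrightarrow> s \<in> FW \<Longrightarrow> cocycle r s \<in> B"
proof (elim FWbar_carE)
  fix i u j v assume rs: "r = (i, coset B u)" "s = (j, coset B v)"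
  have "rep (coset B u) + rep (coset B v) - rep (coset B (u + v))
      = (u + v - rep (coset B (u + v))) - (u - rep (coset B u)) - (v - rep (coset B v))"
    by (simp add: algebra_simps)
  also have "\<dots> \<in> B" by (intro diff_mem rep_diff_mem)
  finally show "cocycle r s \<in> B" unfolding rs cocycle_def using add_mem F2mul_mem by (simp add: cadd_coset)
qed

lemma coords_iso: "loop_iso Q M (FW \<times> B) (cext_mul FWbar_mul cocycle) coords"
proof (rule loop_isoI)
  show "bij_betw coords Q (FW \<times> B)" unfolding bij_betw_def
  proof
    show "inj_on coords Q" unfolding inj_on_def coords_def proj_def by (auto simp: prod_eq_iff)
    show "coords ` Q = FW \<times> B"
    proof
      show "coords ` Q \<subseteq> FW \<times> B"
        using proj_hom rep_diff_mem unfolding coords_def loop_hom_def by auto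
      show "FW \<times> B \<subseteq> coords ` Q"
      proof
        fix p assume "p \<in> FW \<times> B"
        then obtain i U b where p: "p = ((i, U), b)" "i \<in> {0, e}" "U \<in> cosets B" "b \<in> B"
          unfolding FWbar_car_def by auto
        have "coset B (rep U + b) = U" using coset_add_mem[OF p(4)] coset_rep[OF p(3)] by simp
        then have "coords (i, rep U + b) = p" unfolding coords_def proj_def p by simp
        moreover have "(i, rep U + b) \<in> Q" using p(2) by (simp add: Qcar_iff)
        ultimately show "p \<in> coords ` Q" by blast
      qed
    qed
  qed
next
  fix x y :: "'a \<times> 'a"
  obtain i u j v where xy: "x = (i, u)" "y = (j, v)" by (cases x, cases y)
  show "coords (M x y) = cext_mul FWbar_mul cocycle (coords x) (coords y)"
    using proj_hom coset_snd_Qmul[of i u j v] unfolding loop_hom_def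
    unfolding xy coords_def cext_mul_def cocycle_def proj_def FWbar_mul_def snd_Qmul
    by (simp add: fst_Qmul cadd_coset algebra_simps)
qed

lemma Q_central_extension: "is_central_extension Q M B FW FWbar_mul (0, B)"
  unfolding is_central_extension_def
  using comm_group_loop[OF FWbar_comm_group] comm_group cocycle_unit cocycle_mem coords_iso by blast


lemma Q_centrally_nilpotent: "centrally_nilpotent Q M (0, 0)"
  unfolding centrally_nilpotent_def
proof (intro conjI Q_loop two_step_series[OF Q_loop N_normal N_subset])
  show "(0, 0) \<in> N" using zero_mem by simp
  show "subquot M Q N \<subseteq> center (qcar Q M N) (qmul M N)"
    using comm_group_center[OF quotient_N_comm_group] by (simp add: qcar_eq_subquot)
  show "subquot M N {(0, 0)} \<subseteq> center (qcar Q M {(0, 0)}) (qmul M {(0, 0)})"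
    using subquot_unit_center[OF Q_loop N_center] .
qed

lemma Q_congruence_solvable: "congruence_solvable Q M (0, 0)"
  unfolding congruence_solvable_def
proof (intro conjI Q_loop two_step_series[OF Q_loop N_normal N_subset])
  show "(0, 0) \<in> N" using zero_mem by simp
  show "abelian_congruence (qcar Q M N) (qmul M N) N (induced_cong (qcar Q M N) (qmul M N) (subquot M Q N))"
    using comm_group_abelian_congruence[OF quotient_N_comm_group] by (simp add: qcar_eq_subquot)
  show "abelian_congruence (qcar Q M {(0, 0)}) (qmul M {(0, 0)}) {(0, 0)}
     (induced_cong (qcar Q M {(0, 0)}) (qmul M {(0, 0)}) (subquot M N {(0, 0)}))"
    using subquot_unit_abelian_congruence[OF Q_loop N_center N_comm_group] .
qed

lemma Q_classically_solvable: "classically_solvable Q M (0, 0)"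
  unfolding classically_solvable_def
proof (intro conjI Q_loop two_step_series[OF Q_loop N_normal N_subset])
  show "(0, 0) \<in> N" using zero_mem by simp
  show "is_comm_group (subquot M Q N) (qmul M N) N"
    using quotient_N_comm_group by (simp add: qcar_eq_subquot)
  show "is_comm_group (subquot M N {(0, 0)}) (qmul M {(0, 0)}) {(0, 0)}"
    using subquot_unit_comm_group[OF Q_loop N_subset N_comm_group] .
qed

end


theorem proposition3p1:
  fixes e :: "'a::ab_group_add" and B :: "'a set" and qb :: "'a set \<Rightarrow> 'a"
  assumes B_subgroup: "0 \<in> B" "\<forall>x\<in>B. \<forall>y\<in>B. x + y \<in> B" "\<forall>x\<in>B. - x \<in> B"
    and e_order2: "e \<noteq> 0" "e + e = 0"
    and F_sub_B: "e \<in> B"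
    and quotient_elem_abelian_2: "\<forall>u. u + u \<in> B"
    and qform: "is_quadratic_form e B qb"
  shows
    \<comment> \<open>(i)\<close>
    "loop (Qcar e) (Qmul e B qb) (0, 0)
     \<and> centrally_nilpotent (Qcar e) (Qmul e B qb) (0, 0)
     \<and> is_comm_group (FWbar_car e B) FWbar_mul (0, B)
     \<and> (\<forall>x\<in>FWbar_car e B. FWbar_mul x x = (0, B))
     \<and> is_central_extension (Qcar e) (Qmul e B qb) B (FWbar_car e B) FWbar_mul (0, B)
    \<comment> \<open>(ii)\<close>
     \<and> congruence_solvable (Qcar e) (Qmul e B qb) (0, 0)
     \<and> classically_solvable (Qcar e) (Qmul e B qb) (0, 0)
    \<comment> \<open>(iii)\<close>
     \<and> extra_loop (Qcar e) (Qmul e B qb) (0, 0)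
    \<comment> \<open>(iv)\<close>
     \<and> (is_group (Qcar e) (Qmul e B qb) (0, 0) \<longleftrightarrow> is_linear_form e B qb)
    \<comment> \<open>(v)\<close>
     \<and> normal_subloop (Qcar e) (Qmul e B qb) (0, 0) ({0} \<times> UNIV)
     \<and> is_comm_group ({0} \<times> UNIV) (Qmul e B qb) (0, 0)
    \<comment> \<open>(vi)\<close>
     \<and> (\<not> is_group (Qcar e) (Qmul e B qb) (0, 0) \<longrightarrow>
          \<not> abelian_congruence (Qcar e) (Qmul e B qb) (0, 0)
               (induced_cong (Qcar e) (Qmul e B qb) ({0} \<times> UNIV)))"
proof -
  interpret quadratic_loop B e qb
    using assms by unfold_locales blast+
  show ?thesis
    using Q_loop Q_centrally_nilpotent FWbar_comm_group FWbar_square Q_central_extension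
      Q_congruence_solvable Q_classically_solvable Q_extra_loop Q_group_iff_linear
      X_normal X_comm_group X_not_abelian
    by blast
qed

end
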